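(* Consider a finite game with player set $\mathcal{D}$, finite action sets $X_i$ ($i\in\mathcal{D}$), action space $X=\prod_{i\in\mathcal{D}}X_i$, and random utilities whose expectations $U_i:X\to\mathbb{R}$ make $\{\mathcal{D},\{X_i\},\{U_i\}\}$ an exact potential game with potential $\phi:X\to\mathbb{R}$ (utilities normalized by the maximum potential). Run the Binary Log-linear Learning Algorithm (BLLA), described in the context, with fixed temperature $\tau>0$ and $N$ estimation samples per utility estimate. Then the stochastically stable states of BLLA are the global maximizers of $\phi$ if one of the following holds: (1) the estimation noise is bounded in an interval of length $\ell$ and, for some $0<\xi<1$, the number of samples satisfies $$N\ \ge\ \Big(\log\big(\tfrac{4}{\xi}\big)+\tfrac{2}{\tau}\Big)\frac{\ell^2}{2(1-\xi)^2\tau^2};$$ (2) the estimation noise is unbounded with finite mean and variance, its moment generating function $M(\theta)$ is finite, $\theta^*=\arg\max_{\theta}\big(\theta(1-\xi)\tau-\log M(\theta)\big)$ for some $0<\xi<1$, and $$N\ \ge\ \frac{\log\big(\tfrac{4}{\xi}\big)+\tfrac{2}{\tau}}{\log\Big(\frac{e^{\theta^*(1-\xi)\tau}}{M(\theta^* )}\Big)}.$$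
   Context: A potential game: $U_i(a_i,a_{-i})-U_i(a_i',a_{-i})=\phi(a_i,a_{-i})-\phi(a_i',a_{-i})$ for all $i$, $a_i,a_i'\in X_i$, $a_{-i}\in X_{-i}$. Utilities are only observed through noisy samples: for a profile $a$ and player $i$, independent samples $\hat U_{i,k}(a)$, $k=1,\dots,N$, with $\mathbb{E}[\hat U_{i,k}(a)]=U_i(a)$, and the estimate is the sample mean $\hat U^N_i(a)=\frac1N\sum_{k=1}^N\hat U_{i,k}(a)$. The "estimation noise" is the per-sample error $\hat U_{i,k}(a)-\hat U_{i,k}(b)-(U_i(a)-U_i(b))$ of the estimated utility difference between two profiles $a,b$ that differ only in player $i$'s action. All utilities are normalized by the maximum value of the potential. BLLA: start from an arbitrary profile; at each step $t$, a player $i$ and a trial action $\hat a_i\in X_i$ are selected uniformly at random; the estimates $\hat U^N_i(a(t-1))$ and $\hat U^N_i(\hat a_i,a_{-i}(t-1))$ are computed from $N$ fresh samples each; with $\Delta^N_i=\hat U^N_i(a(t-1))-\hat U^N_i(\hat a_i,a_{-i}(t-1))$, player $i$ switches to $\hat a_i$ with probability $(1+e^{\Delta^N_i/\tau})^{-1}$ and otherwise keeps $a_i(t-1)$; all other players keep their actions. For fixed $\tau$ (and $N=N(\tau)$ chosen as in the claim) this defines an irreducible Markov chain on $X$ with stationary distribution $\pi^\tau$; a state $a$ is stochastically stable if $\lim_{\tau\to0^+}\pi^\tau(a)>0$. $\log$ is the natural logarithm. *)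

theory Defs
  imports "HOL-Probability.Probability"
begin

text \<open>Action profiles: players are the elements of a finite type 'p,
 player i's action set is Xs i.\<close>
definition profiles :: "('p \<Rightarrow> 'b set) \<Rightarrow> ('p \<Rightarrow> 'b) set" where
  "profiles Xs = Pi\<^sub>E UNIV Xs"

definition is_potential_game ::
  "('p \<Rightarrow> 'b set) \<Rightarrow> ('p \<Rightarrow> ('p \<Rightarrow> 'b) \<Rightarrow> real) \<Rightarrow> (('p \<Rightarrow> 'b) \<Rightarrow> real) \<Rightarrow> bool" where
  "is_potential_game Xs U phi \<longleftrightarrow>
     (\<forall>i. \<forall>a\<in>profiles Xs. \<forall>x\<in>Xs i. \<forall>x'\<in>Xs i.
        U i (a(i := x)) - U i (a(i := x')) = phi (a(i := x)) - phi (a(i := x')))"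

text \<open>S i a is the distribution (a probability measure on the reals) of a single
 noisy utility sample of player i at profile a.\<close>
definition noise_dist ::
  "('p \<Rightarrow> ('p \<Rightarrow> 'b) \<Rightarrow> real measure) \<Rightarrow> ('p \<Rightarrow> ('p \<Rightarrow> 'b) \<Rightarrow> real)
     \<Rightarrow> 'p \<Rightarrow> ('p \<Rightarrow> 'b) \<Rightarrow> ('p \<Rightarrow> 'b) \<Rightarrow> real measure" where
  "noise_dist S U i a b =
     distr (S i a \<Otimes>\<^sub>M S i b) borel (\<lambda>(y, z). y - z - (U i a - U i b))"

text \<open>Probability that player i switches from the current profile a to the trial
 profile b, when both utilities are estimated by sample means of N fresh
 independent samples: the expectation of (1 + exp(Delta^N/tau))^(-1).\<close>
definition switch_prob ::
  "('p \<Rightarrow> ('p \<Rightarrow> 'b) \<Rightarrow> real measure) \<Rightarrow> real \<Rightarrow> nat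
     \<Rightarrow> 'p \<Rightarrow> ('p \<Rightarrow> 'b) \<Rightarrow> ('p \<Rightarrow> 'b) \<Rightarrow> real" where
  "switch_prob S tau N i a b =
     (\<integral>\<omega>. 1 / (1 + exp (((\<Sum>k<N. fst \<omega> k) / real N - (\<Sum>k<N. snd \<omega> k) / real N) / tau))
        \<partial>(PiM {..<N} (\<lambda>_. S i a) \<Otimes>\<^sub>M PiM {..<N} (\<lambda>_. S i b)))"

definition blla_trans ::
  "('p::finite \<Rightarrow> 'b set) \<Rightarrow> ('p \<Rightarrow> ('p \<Rightarrow> 'b) \<Rightarrow> real measure) \<Rightarrow> real \<Rightarrow> nat
     \<Rightarrow> ('p \<Rightarrow> 'b) \<Rightarrow> ('p \<Rightarrow> 'b) \<Rightarrow> real" where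
  "blla_trans Xs S tau N a b =
     (\<Sum>i\<in>UNIV. (1 / real CARD('p)) *
        (\<Sum>x\<in>Xs i. (1 / real (card (Xs i))) *
           ((if a(i := x) = b then switch_prob S tau N i a (a(i := x)) else 0)
          + (if a = b then 1 - switch_prob S tau N i a (a(i := x)) else 0))))"

definition stationary_dist ::
  "'s set \<Rightarrow> ('s \<Rightarrow> 's \<Rightarrow> real) \<Rightarrow> ('s \<Rightarrow> real) \<Rightarrow> bool" where
  "stationary_dist X P p \<longleftrightarrow>
     (\<forall>a\<in>X. 0 \<le> p a) \<and> (\<Sum>a\<in>X. p a) = 1 \<and>
     (\<forall>b\<in>X. (\<Sum>a\<in>X. p a * P a b) = p b)"

definition stoch_stable :: "(real \<Rightarrow> 's \<Rightarrow> real) \<Rightarrow> 's \<Rightarrow> bool" where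
  "stoch_stable pis a \<longleftrightarrow> (\<exists>L>0. ((\<lambda>tau. pis tau a) \<longlongrightarrow> L) (at_right 0))"

end

theory Submission
  imports Defs
begin

(* The switch probability from a to b is the expectation of a logistic function g of the
   sample-mean gap t; multiplied by exp((U a - U b)/tau) it becomes E f(t) g(t) with
   f(t) = exp(-(t - D)/tau) decreasing and g increasing, and swapping the two sample vectors
   turns E g into the switch probability back from b to a. Oppositely monotone functions of
   one variable are negatively correlated, so E fg <= E f E g, where E f = mgf(-1/(N tau))^N
   is the Chernoff factor K of the per-sample noise. With the potential this gives
   exp(phi a/tau) P(a,b) <= K exp(phi b/tau) P(b,a). Eliminating states one at a time carries
   this approximate reversibility to the stationary distribution at the cost K^(2^|X|), so
   pi^tau lies between two multiples of the Gibbs weights exp(phi/tau) and concentrates on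
   the maximizers of phi once K -> 1. Both sample-size conditions force N tau^2 -> infinity,
   and then K <= exp(C/(N tau^2)) tends to 1. *)

section \<open>Approximately reversible Markov chains\<close>

definition stochastic_on :: "'s set \<Rightarrow> ('s \<Rightarrow> 's \<Rightarrow> real) \<Rightarrow> bool" where
  "stochastic_on X P \<longleftrightarrow> (\<forall>x\<in>X. \<forall>y\<in>X. 0 \<le> P x y) \<and> (\<forall>x\<in>X. (\<Sum>y\<in>X. P x y) = 1)"

definition invariant_on :: "'s set \<Rightarrow> ('s \<Rightarrow> 's \<Rightarrow> real) \<Rightarrow> ('s \<Rightarrow> real) \<Rightarrow> bool" where
  "invariant_on X P p \<longleftrightarrow> (\<forall>x\<in>X. 0 \<le> p x) \<and> (\<forall>y\<in>X. (\<Sum>x\<in>X. p x * P x y) = p y)"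

definition transition_graph :: "'s set \<Rightarrow> ('s \<Rightarrow> 's \<Rightarrow> real) \<Rightarrow> ('s \<times> 's) set" where
  "transition_graph X P = {(x, y). x \<in> X \<and> y \<in> X \<and> x \<noteq> y \<and> 0 < P x y}"

definition irreducible_on :: "'s set \<Rightarrow> ('s \<Rightarrow> 's \<Rightarrow> real) \<Rightarrow> bool" where
  "irreducible_on X P \<longleftrightarrow> (\<forall>x\<in>X. \<forall>y\<in>X. (x, y) \<in> (transition_graph X P)\<^sup>*)"

definition approx_reversible :: "'s set \<Rightarrow> ('s \<Rightarrow> 's \<Rightarrow> real) \<Rightarrow> ('s \<Rightarrow> real) \<Rightarrow> real \<Rightarrow> bool" where
  "approx_reversible X P \<pi> K \<longleftrightarrow> (\<forall>x\<in>X. \<forall>y\<in>X. x \<noteq> y \<longrightarrow> \<pi> x * P x y \<le> K * (\<pi> y * P y x))"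

text \<open>The chain watched only while it is off z: every excursion through z is collapsed
  into a single step, z being left towards y with probability P z y / (1 - P z z).\<close>
definition censor :: "'s \<Rightarrow> ('s \<Rightarrow> 's \<Rightarrow> real) \<Rightarrow> 's \<Rightarrow> 's \<Rightarrow> real" where
  "censor z P x y = P x y + P x z * P z y / (1 - P z z)"

lemma stochastic_censor:
  assumes "finite X" "stochastic_on X P" "z \<in> X" "P z z < 1"
  shows "stochastic_on (X - {z}) (censor z P)"
  unfolding stochastic_on_def
proof (intro conjI ballI)
  fix x y assume "x \<in> X - {z}" "y \<in> X - {z}"
  then show "0 \<le> censor z P x y"
    using assms unfolding stochastic_on_def censor_def by (auto intro!: divide_nonneg_pos)
next
  fix x assume x: "x \<in> X - {z}"
  have rows: "(\<Sum>y\<in>X - {z}. P u y) = 1 - P u z" if "u \<in> X" for u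
    using assms that unfolding stochastic_on_def by (simp add: sum_diff1)
  have "(\<Sum>y\<in>X - {z}. censor z P x y)
      = (\<Sum>y\<in>X - {z}. P x y) + P x z / (1 - P z z) * (\<Sum>y\<in>X - {z}. P z y)"
    by (simp add: censor_def sum.distrib sum_distrib_left)
  then show "(\<Sum>y\<in>X - {z}. censor z P x y) = 1"
    using rows[of x] rows[of z] x assms(3,4) by simp
qed

lemma invariant_censor:
  assumes "finite X" "invariant_on X P p" "z \<in> X" "P z z < 1"
  shows "invariant_on (X - {z}) (censor z P) p"
  unfolding invariant_on_def
proof (intro conjI ballI)
  fix y assume y: "y \<in> X - {z}"
  have flux: "(\<Sum>x\<in>X - {z}. p x * P x v) = p v - p z * P z v" if "v \<in> X" for v
    using assms that unfolding invariant_on_def by (simp add: sum_diff1)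
  have "(\<Sum>x\<in>X - {z}. p x * censor z P x y)
      = (\<Sum>x\<in>X - {z}. p x * P x y) + (\<Sum>x\<in>X - {z}. p x * P x z) * P z y / (1 - P z z)"
    by (simp add: censor_def algebra_simps sum.distrib sum_distrib_left sum_divide_distrib)
  also have "\<dots> = (\<Sum>x\<in>X - {z}. p x * P x y) + p z * P z y"
  proof -
    have "(\<Sum>x\<in>X - {z}. p x * P x z) = p z * (1 - P z z)"
      using flux[of z] assms(3) by (simp add: algebra_simps)
    then show ?thesis using assms(4) by simp
  qed
  finally show "(\<Sum>x\<in>X - {z}. p x * censor z P x y) = p y"
    using flux[of y] y by simp
qed (use assms in \<open>auto simp: invariant_on_def\<close>)

lemma approx_reversible_censor:
  assumes "stochastic_on X P" "approx_reversible X P \<pi> K" "\<forall>x\<in>X. 0 \<le> \<pi> x" "1 \<le> K"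
    and z: "z \<in> X" "P z z < 1"
  shows "approx_reversible (X - {z}) (censor z P) \<pi> (K\<^sup>2)"
  unfolding approx_reversible_def
proof (intro ballI impI)
  fix u v assume u: "u \<in> X - {z}" and v: "v \<in> X - {z}" and uv: "u \<noteq> v"
  have nn: "0 \<le> P z v" "0 \<le> P z u" "0 \<le> P v z" "0 \<le> P v u" "0 \<le> \<pi> v"
    using assms u v unfolding stochastic_on_def by auto
  have bal: "\<pi> s * P s t \<le> K * (\<pi> t * P t s)" if "s \<in> X" "t \<in> X" "s \<noteq> t" for s t
    using assms that unfolding approx_reversible_def by blast
  have direct: "\<pi> u * P u v \<le> K\<^sup>2 * (\<pi> v * P v u)"
  proof -
    have "K * (\<pi> v * P v u) \<le> K\<^sup>2 * (\<pi> v * P v u)"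
      using assms(4) nn by (intro mult_right_mono) (auto simp: power2_eq_square)
    moreover have "\<pi> u * P u v \<le> K * (\<pi> v * P v u)" using bal[of u v] u v uv by blast
    ultimately show ?thesis by linarith
  qed
  have "\<pi> u * P u z * P z v \<le> K * (\<pi> z * P z u) * P z v"
    using bal[of u z] u z nn by (intro mult_right_mono) auto
  also have "\<dots> = K * P z u * (\<pi> z * P z v)" by (simp add: algebra_simps)
  also have "\<dots> \<le> K * P z u * (K * (\<pi> v * P v z))"
    using bal[of z v] v z assms(4) nn by (intro mult_left_mono) auto
  finally have via_z: "\<pi> u * P u z * P z v \<le> K\<^sup>2 * (\<pi> v * (P v z * P z u))"
    by (simp add: power2_eq_square algebra_simps)
  have "\<pi> u * censor z P u v = \<pi> u * P u v + \<pi> u * P u z * P z v / (1 - P z z)"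
    by (simp add: censor_def algebra_simps)
  also have "\<dots> \<le> K\<^sup>2 * (\<pi> v * P v u) + K\<^sup>2 * (\<pi> v * (P v z * P z u)) / (1 - P z z)"
    using direct via_z z by (intro add_mono divide_right_mono) auto
  also have "\<dots> = K\<^sup>2 * (\<pi> v * censor z P v u)"
    by (simp add: censor_def algebra_simps add_divide_distrib)
  finally show "\<pi> u * censor z P u v \<le> K\<^sup>2 * (\<pi> v * censor z P v u)" .
qed

lemma irreducible_censor:
  assumes "stochastic_on X P" "irreducible_on X P" and z: "z \<in> X" "P z z < 1"
  shows "irreducible_on (X - {z}) (censor z P)"
proof -
  let ?G = "transition_graph (X - {z}) (censor z P)"
  have le: "P x y \<le> censor z P x y" if "x \<in> X" "y \<in> X" for x y
    using assms that unfolding stochastic_on_def censor_def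
    by (auto intro!: divide_nonneg_pos mult_nonneg_nonneg)
  have "(w \<noteq> z \<longrightarrow> (u, w) \<in> ?G\<^sup>*) \<and> (w = z \<longrightarrow> (\<exists>v\<in>X - {z}. (u, v) \<in> ?G\<^sup>* \<and> 0 < P v z))"
    if path: "(u, w) \<in> (transition_graph X P)\<^sup>*" and u: "u \<in> X - {z}" for u w
    using path
  proof (induction rule: rtrancl_induct)
    case (step w w')
    then have w: "w \<in> X" "w' \<in> X" "w \<noteq> w'" "0 < P w w'" by (auto simp: transition_graph_def)
    show ?case
    proof (cases "w = z")
      case False
      then have "(u, w) \<in> ?G\<^sup>*" using step.IH by auto
      moreover have "w' \<noteq> z \<Longrightarrow> (w, w') \<in> ?G"
        using w False le[of w w'] by (auto simp: transition_graph_def)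
      ultimately show ?thesis using False w by (auto intro: rtrancl_into_rtrancl)
    next
      case True
      then obtain v where v: "v \<in> X - {z}" "(u, v) \<in> ?G\<^sup>*" "0 < P v z"
        using step.IH by auto
      have "0 < censor z P v w'" if "v \<noteq> w'"
      proof -
        have "0 < P v z * P z w' / (1 - P z z)" using v w True z by auto
        moreover have "0 \<le> P v w'" using assms(1) v w unfolding stochastic_on_def by auto
        ultimately show ?thesis unfolding censor_def by linarith
      qed
      then have "v \<noteq> w' \<Longrightarrow> (v, w') \<in> ?G" using v w True by (auto simp: transition_graph_def)
      then show ?thesis using v w True by (cases "v = w'") (auto intro: rtrancl_into_rtrancl)
    qed
  qed (use u in auto)
  then show ?thesis using assms(2) unfolding irreducible_on_def by blast
qed

lemma irreducible_stay_lt_1: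
  assumes "finite X" "stochastic_on X P" "irreducible_on X P" "z \<in> X" "y \<in> X" "y \<noteq> z"
  shows "P z z < 1"
proof -
  have "(z, y) \<in> (transition_graph X P)\<^sup>*" using assms(3-5) unfolding irreducible_on_def by blast
  then obtain w where w: "(z, w) \<in> transition_graph X P"
    using assms(6) by (cases rule: converse_rtranclE) auto
  then have "w \<in> X" "w \<noteq> z" "0 < P z w" by (auto simp: transition_graph_def)
  then have "P z z + P z w \<le> (\<Sum>u\<in>X. P z u)"
    using assms(1,2,4) sum_mono2[of X "{z, w}" "P z"] unfolding stochastic_on_def by auto
  then show ?thesis using assms(2,4) \<open>0 < P z w\<close> unfolding stochastic_on_def by simp
qed

lemma two_state_approx_balance:
  assumes "stochastic_on {x, y} P" "irreducible_on {x, y} P" "invariant_on {x, y} P p"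
    "approx_reversible {x, y} P \<pi> K" "x \<noteq> y"
  shows "p x * \<pi> y \<le> K * (p y * \<pi> x)"
proof -
  have Pxy: "0 < P x y"
    using irreducible_stay_lt_1[OF _ assms(1,2), of x y] assms(1,5)
    unfolding stochastic_on_def by simp
  have "p x * P x y = p y - p y * P y y" "P y x = 1 - P y y"
    using assms(1,3,5) unfolding invariant_on_def stochastic_on_def by (auto simp: algebra_simps)
  then have flux: "p x * P x y = p y * P y x" by (simp add: right_diff_distrib)
  have "p x * \<pi> y * P x y = p y * (\<pi> y * P y x)" using flux by (simp add: algebra_simps)
  also have "\<dots> \<le> p y * (K * (\<pi> x * P x y))"
    using assms(3,4,5) unfolding invariant_on_def approx_reversible_def
    by (intro mult_left_mono) auto
  finally show ?thesis using Pxy by (simp add: algebra_simps)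
qed

text \<open>Eliminating one state squares the balance defect, so n states cost K^(2^n).\<close>
lemma invariant_approx_balance:
  assumes "finite X" "stochastic_on X P" "irreducible_on X P" "invariant_on X P p"
    "approx_reversible X P \<pi> K" "\<forall>x\<in>X. 0 \<le> \<pi> x" "1 \<le> K" "x \<in> X" "y \<in> X"
  shows "p x * \<pi> y \<le> K ^ 2 ^ card X * (p y * \<pi> x)"
  using assms
proof (induction "card X" arbitrary: X P K x y rule: less_induct)
  case less
  have K: "1 \<le> K ^ 2 ^ card X" using less.prems(7) by simp
  have nn: "0 \<le> p y * \<pi> x" using less.prems unfolding invariant_on_def by simp
  consider "x = y" | "X = {x, y}" "x \<noteq> y" | z where "z \<in> X" "z \<noteq> x" "z \<noteq> y"
    using less.prems(8,9) by blast
  then show ?case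
  proof cases
    case 1
    then show ?thesis using K nn by (simp add: mult_le_cancel_right1 mult_right_mono[of 1])
  next
    case 2
    then have "K \<le> K ^ 2 ^ card X"
      using less.prems(7) power_increasing[of 1 "2 ^ card X" K] by simp
    then show ?thesis
      using two_state_approx_balance[of x y P p \<pi> K] less.prems 2 nn
      by (metis insertI1 mult_right_mono order_trans)
  next
    case 3
    have stay: "P z z < 1" using irreducible_stay_lt_1 less.prems 3 by metis
    have card: "card (X - {z}) < card X" using less.prems(1) 3(1) by (rule card_Diff1_less)
    have K2: "1 \<le> K\<^sup>2" using less.prems(7) by (simp add: one_le_power)
    have "p x * \<pi> y \<le> (K\<^sup>2) ^ 2 ^ card (X - {z}) * (p y * \<pi> x)"
    proof (rule less.hyps[OF card])
      show "stochastic_on (X - {z}) (censor z P)"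
        by (rule stochastic_censor) (use less.prems 3 stay in auto)
      show "irreducible_on (X - {z}) (censor z P)"
        by (rule irreducible_censor) (use less.prems 3 stay in auto)
      show "invariant_on (X - {z}) (censor z P) p"
        by (rule invariant_censor) (use less.prems 3 stay in auto)
      show "approx_reversible (X - {z}) (censor z P) \<pi> (K\<^sup>2)"
        by (rule approx_reversible_censor) (use less.prems 3 stay in auto)
    qed (use less.prems 3 K2 in auto)
    moreover have "Suc (card (X - {z})) = card X"
      using less.prems(1) 3(1) card.remove by fastforce
    then have "(K\<^sup>2) ^ 2 ^ card (X - {z}) = K ^ 2 ^ card X"
      by (metis power_mult power_Suc mult.commute)
    ultimately show ?thesis by simp
  qed
qed

lemma exp_div_tendsto_0:
  assumes "c < 0"
  shows "((\<lambda>\<tau>::real. exp (c / \<tau>)) \<longlongrightarrow> 0) (at_right 0)"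
proof -
  have "filterlim (\<lambda>\<tau>. c * inverse \<tau>) at_bot (at_right (0::real))"
    by (rule filterlim_tendsto_neg_mult_at_bot[OF tendsto_const assms filterlim_inverse_at_top_right])
  from filterlim_compose[OF exp_at_bot this] show ?thesis by (simp add: divide_inverse)
qed

lemma approx_gibbs_bounds:
  fixes p w :: "'s \<Rightarrow> real"
  assumes "finite X" "\<forall>b\<in>X. 0 < w b" "(\<Sum>b\<in>X. p b) = 1" "0 < K"
    and balance: "\<forall>c\<in>X. \<forall>d\<in>X. p c * w d \<le> K * (p d * w c)" and a: "a \<in> X"
  shows "w a / (K * (\<Sum>b\<in>X. w b)) \<le> p a" "p a \<le> K * w a / (\<Sum>b\<in>X. w b)"
proof -
  have Z: "0 < (\<Sum>b\<in>X. w b)" using assms(1,2) a by (intro sum_pos) auto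
  have "w a = (\<Sum>b\<in>X. p b * w a)" using assms(3) by (simp add: sum_distrib_right[symmetric])
  also have "\<dots> \<le> (\<Sum>b\<in>X. K * (p a * w b))" using balance a by (intro sum_mono) auto
  also have "\<dots> = K * (\<Sum>b\<in>X. w b) * p a" by (simp add: sum_distrib_left mult_ac)
  finally show "w a / (K * (\<Sum>b\<in>X. w b)) \<le> p a"
    using Z \<open>0 < K\<close> by (simp add: divide_le_eq mult.commute)
  have "p a * (\<Sum>b\<in>X. w b) \<le> (\<Sum>b\<in>X. K * (p b * w a))"
    unfolding sum_distrib_left using balance a by (intro sum_mono) auto
  also have "\<dots> = K * w a" using assms(3) by (simp add: sum_distrib_left[symmetric] sum_distrib_right[symmetric])
  finally show "p a \<le> K * w a / (\<Sum>b\<in>X. w b)" using Z by (simp add: le_divide_eq)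
qed

lemma approx_gibbs_tendsto:
  fixes \<phi> :: "'s \<Rightarrow> real" and p :: "real \<Rightarrow> 's \<Rightarrow> real"
  assumes X: "finite X" "X \<noteq> {}" and K: "(K \<longlongrightarrow> 1) (at_right 0)"
    and dist: "\<forall>\<tau>>0. (\<forall>a\<in>X. 0 \<le> p \<tau> a) \<and> (\<Sum>a\<in>X. p \<tau> a) = 1"
    and gibbs: "\<forall>\<tau>>0. \<forall>a\<in>X. \<forall>b\<in>X. p \<tau> a * exp (\<phi> b / \<tau>) \<le> K \<tau> * (p \<tau> b * exp (\<phi> a / \<tau>))"
    and a: "a \<in> X"
  defines "\<mu> \<equiv> Max (\<phi> ` X)"
  shows "((\<lambda>\<tau>. p \<tau> a) \<longlongrightarrow> (if \<phi> a = \<mu> then 1 else 0) / card {b\<in>X. \<phi> b = \<mu>}) (at_right 0)"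
proof -
  define w where "w \<tau> b = exp ((\<phi> b - \<mu>) / \<tau>)" for \<tau> b
  define m where "m = card {b\<in>X. \<phi> b = \<mu>}"
  have w_lim: "((\<lambda>\<tau>. w \<tau> b) \<longlongrightarrow> (if \<phi> b = \<mu> then 1 else 0)) (at_right 0)" if "b \<in> X" for b
  proof -
    have "\<phi> b \<le> \<mu>" unfolding \<mu>_def using X that by simp
    then show ?thesis using exp_div_tendsto_0[of "\<phi> b - \<mu>"] by (auto simp: w_def less_le)
  qed
  have "\<mu> \<in> \<phi> ` X" unfolding \<mu>_def using X by (intro Max_in) auto
  then have "m \<noteq> 0" using X by (auto simp: m_def card_eq_0_iff)
  have "((\<lambda>\<tau>. \<Sum>b\<in>X. w \<tau> b) \<longlongrightarrow> (\<Sum>b\<in>X. if \<phi> b = \<mu> then 1 else 0)) (at_right 0)"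
    by (intro tendsto_sum w_lim)
  then have Z_lim: "((\<lambda>\<tau>. \<Sum>b\<in>X. w \<tau> b) \<longlongrightarrow> real m) (at_right 0)"
    using X by (simp add: sum.If_cases m_def Int_def conj_commute)
  have balance: "p \<tau> c * w \<tau> d \<le> K \<tau> * (p \<tau> d * w \<tau> c)" if "0 < \<tau>" "c \<in> X" "d \<in> X" for \<tau> c d
  proof -
    have "w \<tau> b = exp (\<phi> b / \<tau>) / exp (\<mu> / \<tau>)" for b by (simp add: w_def exp_diff diff_divide_distrib)
    then show ?thesis
      using gibbs that by (simp add: divide_right_mono mult.assoc[symmetric] times_divide_eq_right)
  qed
  have bounds: "w \<tau> a / (K \<tau> * (\<Sum>b\<in>X. w \<tau> b)) \<le> p \<tau> a \<and> p \<tau> a \<le> K \<tau> * w \<tau> a / (\<Sum>b\<in>X. w \<tau> b)"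
    if "0 < \<tau>" "0 < K \<tau>" for \<tau>
    using balance[OF that(1)] dist that
    by (intro conjI approx_gibbs_bounds[where w="w \<tau>" and p="p \<tau>", OF X(1) _ _ that(2) _ a])
      (auto simp: w_def)
  have ev: "eventually (\<lambda>\<tau>. 0 < \<tau> \<and> 0 < K \<tau>) (at_right 0)"
    using order_tendstoD(1)[OF K zero_less_one] eventually_at_right_less[of 0] by eventually_elim simp
  let ?L = "(if \<phi> a = \<mu> then 1 else 0) / real m"
  show ?thesis unfolding m_def[symmetric]
  proof (rule tendsto_sandwich)
    show "eventually (\<lambda>\<tau>. w \<tau> a / (K \<tau> * (\<Sum>b\<in>X. w \<tau> b)) \<le> p \<tau> a) (at_right 0)"
      using ev by eventually_elim (use bounds in auto)
    show "eventually (\<lambda>\<tau>. p \<tau> a \<le> K \<tau> * w \<tau> a / (\<Sum>b\<in>X. w \<tau> b)) (at_right 0)"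
      using ev by eventually_elim (use bounds in auto)
    show "((\<lambda>\<tau>. w \<tau> a / (K \<tau> * (\<Sum>b\<in>X. w \<tau> b))) \<longlongrightarrow> ?L) (at_right 0)"
      using tendsto_divide[OF w_lim[OF a] tendsto_mult[OF K Z_lim]] \<open>m \<noteq> 0\<close> by simp
    show "((\<lambda>\<tau>. K \<tau> * w \<tau> a / (\<Sum>b\<in>X. w \<tau> b)) \<longlongrightarrow> ?L) (at_right 0)"
      using tendsto_divide[OF tendsto_mult[OF K w_lim[OF a]] Z_lim] \<open>m \<noteq> 0\<close> by simp
  qed
qed

lemma stoch_stable_iff_maximizer:
  fixes \<phi> :: "'s \<Rightarrow> real" and p :: "real \<Rightarrow> 's \<Rightarrow> real"
  assumes "finite X" "X \<noteq> {}" "(K \<longlongrightarrow> 1) (at_right 0)"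
    and "\<forall>\<tau>>0. (\<forall>a\<in>X. 0 \<le> p \<tau> a) \<and> (\<Sum>a\<in>X. p \<tau> a) = 1"
    and "\<forall>\<tau>>0. \<forall>a\<in>X. \<forall>b\<in>X. p \<tau> a * exp (\<phi> b / \<tau>) \<le> K \<tau> * (p \<tau> b * exp (\<phi> a / \<tau>))"
    and a: "a \<in> X"
  shows "stoch_stable p a \<longleftrightarrow> (\<forall>b\<in>X. \<phi> b \<le> \<phi> a)"
proof -
  let ?\<mu> = "Max (\<phi> ` X)"
  have max_iff: "(\<forall>b\<in>X. \<phi> b \<le> \<phi> a) \<longleftrightarrow> \<phi> a = ?\<mu>"
  proof
    assume "\<forall>b\<in>X. \<phi> b \<le> \<phi> a"
    then show "\<phi> a = ?\<mu>" using assms(1) a by (intro Max_eqI[symmetric]) auto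
  qed (use assms(1) a in auto)
  have lim: "((\<lambda>\<tau>. p \<tau> a) \<longlongrightarrow> (if \<phi> a = ?\<mu> then 1 else 0) / card {b\<in>X. \<phi> b = ?\<mu>}) (at_right 0)"
    by (rule approx_gibbs_tendsto[OF assms])
  show ?thesis
  proof (cases "\<phi> a = ?\<mu>")
    case True
    then have "0 < 1 / real (card {b\<in>X. \<phi> b = ?\<mu>})" using assms(1) a by (auto simp: card_gt_0_iff)
    moreover have "((\<lambda>\<tau>. p \<tau> a) \<longlongrightarrow> 1 / real (card {b\<in>X. \<phi> b = ?\<mu>})) (at_right 0)"
      using lim True by simp
    ultimately have "stoch_stable p a" unfolding stoch_stable_def by blast
    then show ?thesis using True max_iff by simp
  next
    case False
    have "\<not> stoch_stable p a"
    proof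
      assume "stoch_stable p a"
      then obtain L where L: "0 < L" "((\<lambda>\<tau>. p \<tau> a) \<longlongrightarrow> L) (at_right 0)"
        unfolding stoch_stable_def by blast
      have "L = 0" using tendsto_unique[OF trivial_limit_at_right_real L(2) lim] False by simp
      then show False using L(1) by simp
    qed
    then show ?thesis using False max_iff by simp
  qed
qed

section \<open>Exponential moments of sample sums\<close>

definition mgf :: "real measure \<Rightarrow> real \<Rightarrow> real" where
  "mgf \<nu> \<theta> = (\<integral>\<eta>. exp (\<theta> * \<eta>) \<partial>\<nu>)"

lemma nn_integral_exp_diff_pair:
  assumes M2: "sigma_finite_measure M2"
    and f[measurable]: "f \<in> borel_measurable M1" and g[measurable]: "g \<in> borel_measurable M2"
  shows "(\<integral>\<^sup>+\<omega>. ennreal (exp (\<theta> * (f (fst \<omega>) - g (snd \<omega>) - D))) \<partial>(M1 \<Otimes>\<^sub>M M2))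
       = (\<integral>\<^sup>+x. ennreal (exp (\<theta> * f x)) \<partial>M1) * (\<integral>\<^sup>+y. ennreal (exp (- \<theta> * g y)) \<partial>M2)
         * ennreal (exp (- \<theta> * D))"
proof -
  have "(\<integral>\<^sup>+\<omega>. ennreal (exp (\<theta> * (f (fst \<omega>) - g (snd \<omega>) - D))) \<partial>(M1 \<Otimes>\<^sub>M M2))
      = (\<integral>\<^sup>+x. \<integral>\<^sup>+y. ennreal (exp (\<theta> * f x) * exp (- \<theta> * D)) * ennreal (exp (- \<theta> * g y)) \<partial>M2 \<partial>M1)"
    by (subst sigma_finite_measure.nn_integral_fst[OF M2, symmetric]) (auto simp: ennreal_mult'[symmetric]
        exp_add[symmetric] algebra_simps intro!: nn_integral_cong)
  also have "\<dots> = (\<integral>\<^sup>+x. ennreal (exp (\<theta> * f x)) * ennreal (exp (- \<theta> * D)) \<partial>M1)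
                 * (\<integral>\<^sup>+y. ennreal (exp (- \<theta> * g y)) \<partial>M2)"
    by (simp add: nn_integral_cmult nn_integral_multc ennreal_mult')
  finally show ?thesis by (simp add: nn_integral_multc mult_ac)
qed

lemma nn_integral_PiM_exp_sum:
  fixes M :: "real measure"
  assumes "prob_space M" "sets M = sets borel"
  shows "(\<integral>\<^sup>+x. ennreal (exp (c * (\<Sum>k<N. x k))) \<partial>PiM {..<N} (\<lambda>_. M))
       = (\<integral>\<^sup>+y. ennreal (exp (c * y)) \<partial>M) ^ N"
proof -
  interpret product_sigma_finite "\<lambda>_. M"
    unfolding product_sigma_finite_def using assms prob_space_imp_sigma_finite by blast
  have "(\<integral>\<^sup>+x. ennreal (exp (c * (\<Sum>k<N. x k))) \<partial>PiM {..<N} (\<lambda>_. M))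
      = (\<integral>\<^sup>+x. (\<Prod>k\<in>{..<N}. ennreal (exp (c * x k))) \<partial>PiM {..<N} (\<lambda>_. M))"
    by (intro nn_integral_cong) (simp add: sum_distrib_left exp_sum prod_ennreal)
  also have "\<dots> = (\<Prod>k\<in>{..<N}. \<integral>\<^sup>+y. ennreal (exp (c * y)) \<partial>M)"
    by (rule product_nn_integral_prod) (simp_all add: measurable_cong_sets[OF assms(2) refl])
  finally show ?thesis by simp
qed

lemma borel_measurable_PiM_sum:
  fixes M :: "real measure"
  assumes "sets M = sets borel"
  shows "(\<lambda>x. \<Sum>k<N. x k) \<in> borel_measurable (PiM {..<N} (\<lambda>_. M))"
proof -
  have component: "(\<lambda>x. x k) \<in> borel_measurable (PiM {..<N} (\<lambda>_. M))" if "k < N" for k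
    using measurable_component_singleton[of k "{..<N}" "\<lambda>_. M"] that
    by (simp add: measurable_cong_sets[OF refl assms])
  then show ?thesis
    using borel_measurable_sum[of "{..<N}" "\<lambda>k x. x k" "PiM {..<N} (\<lambda>_. M)"] by simp
qed

lemma nn_integral_exp_sample_sums:
  assumes Ma: "prob_space Ma" "sets Ma = sets borel" and Mb: "prob_space Mb" "sets Mb = sets borel"
  shows "(\<integral>\<^sup>+\<omega>. ennreal (exp (\<theta> * ((\<Sum>k<N. fst \<omega> k) - (\<Sum>k<N. snd \<omega> k) - real N * D)))
            \<partial>(PiM {..<N} (\<lambda>_. Ma) \<Otimes>\<^sub>M PiM {..<N} (\<lambda>_. Mb)))
       = (\<integral>\<^sup>+\<eta>. ennreal (exp (\<theta> * \<eta>)) \<partial>distr (Ma \<Otimes>\<^sub>M Mb) borel (\<lambda>(y, z). y - z - D)) ^ N"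
proof -
  have sf: "sigma_finite_measure Mb" "sigma_finite_measure (PiM {..<N} (\<lambda>_. Mb))"
    using Mb by (auto intro!: prob_space_imp_sigma_finite prob_space_PiM)
  have id: "(\<lambda>y. y) \<in> borel_measurable M" if "sets M = sets borel" for M :: "real measure"
    by (simp add: measurable_cong_sets[OF that refl])
  have "(\<integral>\<^sup>+\<eta>. ennreal (exp (\<theta> * \<eta>)) \<partial>distr (Ma \<Otimes>\<^sub>M Mb) borel (\<lambda>(y, z). y - z - D))
      = (\<integral>\<^sup>+\<omega>. ennreal (exp (\<theta> * (fst \<omega> - snd \<omega> - D))) \<partial>(Ma \<Otimes>\<^sub>M Mb))"
    by (subst nn_integral_distr)
      (auto simp: case_prod_beta measurable_cong_sets[OF sets_pair_measure_cong[OF Ma(2) Mb(2)] refl])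
  also have "\<dots> = (\<integral>\<^sup>+y. ennreal (exp (\<theta> * y)) \<partial>Ma) * (\<integral>\<^sup>+z. ennreal (exp (- \<theta> * z)) \<partial>Mb)
      * ennreal (exp (- \<theta> * D))"
    using nn_integral_exp_diff_pair[OF sf(1) id[OF Ma(2)] id[OF Mb(2)]] by simp
  finally have single: "(\<integral>\<^sup>+\<eta>. ennreal (exp (\<theta> * \<eta>)) \<partial>distr (Ma \<Otimes>\<^sub>M Mb) borel (\<lambda>(y, z). y - z - D))
      = (\<integral>\<^sup>+y. ennreal (exp (\<theta> * y)) \<partial>Ma) * (\<integral>\<^sup>+z. ennreal (exp (- \<theta> * z)) \<partial>Mb)
      * ennreal (exp (- \<theta> * D))" .
  have "ennreal (exp (- \<theta> * (real N * D))) = ennreal (exp (- \<theta> * D)) ^ N"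
    by (simp add: ennreal_power exp_of_nat_mult[symmetric] mult_ac)
  then show ?thesis
    unfolding single using nn_integral_exp_diff_pair[OF sf(2)
      borel_measurable_PiM_sum[OF Ma(2), of N] borel_measurable_PiM_sum[OF Mb(2)],
      where \<theta>=\<theta> and D="real N * D"]
    using nn_integral_PiM_exp_sum[OF Ma, where c=\<theta> and N=N]
      nn_integral_PiM_exp_sum[OF Mb, where c="- \<theta>" and N=N]
    by (simp add: power_mult_distrib)
qed

lemma antimono_mono_crossing:
  fixes f g :: "real \<Rightarrow> real"
  assumes "antimono f" "mono g"
  shows "(f t - f s) * (g t - g s) \<le> 0"
  using assms by (cases "t \<le> s") (auto simp: antimono_def mono_def mult_nonneg_nonpos2 mult_nonneg_nonpos)

lemma (in prob_space) expectation_pos: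
  fixes f :: "'a \<Rightarrow> real"
  assumes "integrable M f" "\<And>x. x \<in> space M \<Longrightarrow> 0 < f x"
  shows "0 < expectation f"
  using integral_less_AE_space[of "\<lambda>_. 0" f] assms by (auto simp: emeasure_space_1)

lemma (in prob_space) expectation_mult_le_of_crossing:
  fixes f h :: "'a \<Rightarrow> real"
  assumes f: "integrable M f" and h: "h \<in> borel_measurable M" "\<And>\<omega>. \<omega> \<in> space M \<Longrightarrow> \<bar>h \<omega>\<bar> \<le> B"
    and crossing: "\<And>\<omega>. \<omega> \<in> space M \<Longrightarrow> (f \<omega> - expectation f) * (h \<omega> - c) \<le> 0"
  shows "expectation (\<lambda>\<omega>. f \<omega> * h \<omega>) \<le> expectation f * expectation h"
proof -
  have ih: "integrable M h" by (rule integrable_const_bound[where B=B]) (use h in auto)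
  have ifh: "integrable M (\<lambda>\<omega>. f \<omega> * h \<omega>)"
  proof (rule Bochner_Integration.integrable_bound[OF integrable_mult_right[of B, OF f]])
    have "\<bar>f \<omega>\<bar> * \<bar>h \<omega>\<bar> \<le> \<bar>f \<omega>\<bar> * \<bar>B\<bar>" if "\<omega> \<in> space M" for \<omega>
      using h(2)[OF that] by (intro mult_left_mono) auto
    then show "AE \<omega> in M. norm (f \<omega> * h \<omega>) \<le> norm (B * f \<omega>)"
      by (intro AE_I2) (auto simp: abs_mult mult.commute)
  qed (use f h in measurable)
  have "0 \<le> expectation (\<lambda>\<omega>. - ((f \<omega> - expectation f) * (h \<omega> - c)))"
    by (intro integral_nonneg_AE AE_I2) (use crossing in force)
  moreover have "expectation (\<lambda>\<omega>. (f \<omega> - expectation f) * (h \<omega> - c))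
      = expectation (\<lambda>\<omega>. f \<omega> * h \<omega>) - expectation f * expectation h"
    using f ih ifh by (simp add: algebra_simps prob_space)
  ultimately show ?thesis by (simp add: Bochner_Integration.integral_minus)
qed

lemma integrable_if_AE_bounded:
  fixes M :: "real measure" and f :: "real \<Rightarrow> real"
  assumes "finite_measure M" "sets M = sets borel" "continuous_on UNIV f" "AE \<eta> in M. c \<le> \<eta> \<and> \<eta> \<le> d"
  shows "integrable M f"
proof -
  have "bounded (f ` {c..d})"
    by (intro compact_imp_bounded compact_continuous_image continuous_on_subset[OF assms(3)]) auto
  then obtain B where B: "\<forall>\<eta>\<in>{c..d}. norm (f \<eta>) \<le> B" unfolding bounded_iff by auto
  show ?thesis
  proof (rule finite_measure.integrable_const_bound[OF assms(1), where B=B])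
    show "AE \<eta> in M. norm (f \<eta>) \<le> B" using assms(4) by eventually_elim (use B in auto)
  qed (use assms(3) in \<open>simp add: measurable_cong_sets[OF assms(2) refl] borel_measurable_continuous_onI\<close>)
qed

section \<open>Switching probabilities\<close>

lemma sets_noise_dist [simp]: "sets (noise_dist S U i a b) = sets borel"
  by (simp add: noise_dist_def)

lemma prob_space_noise_dist:
  assumes "prob_space (S i a)" "sets (S i a) = sets borel" "prob_space (S i b)" "sets (S i b) = sets borel"
  shows "prob_space (noise_dist S U i a b)"
  unfolding noise_dist_def
  by (intro prob_space.prob_space_distr prob_space_pair assms)
    (simp add: measurable_cong_sets[OF sets_pair_measure_cong[OF assms(2,4)] refl])

lemma integral_noise_dist:
  assumes Sa: "prob_space (S i a)" "sets (S i a) = sets borel" "integrable (S i a) (\<lambda>y. y)"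
    and Sb: "prob_space (S i b)" "sets (S i b) = sets borel" "integrable (S i b) (\<lambda>z. z)"
    and means: "(\<integral>y. y \<partial>S i a) = U i a" "(\<integral>z. z \<partial>S i b) = U i b"
    and int: "integrable (noise_dist S U i a b) (\<lambda>\<eta>. \<eta>)"
  shows "(\<integral>\<eta>. \<eta> \<partial>noise_dist S U i a b) = 0"
proof -
  interpret pair_sigma_finite "S i a" "S i b"
    using Sa Sb by (simp add: pair_sigma_finite_def prob_space_imp_sigma_finite)
  interpret Sa: prob_space "S i a" by (rule Sa(1))
  interpret Sb: prob_space "S i b" by (rule Sb(1))
  let ?D = "U i a - U i b"
  have meas: "(\<lambda>(y, z). y - z - ?D) \<in> borel_measurable (S i a \<Otimes>\<^sub>M S i b)"
    by (simp add: measurable_cong_sets[OF sets_pair_measure_cong[OF Sa(2) Sb(2)] refl])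
  have "integrable (S i a \<Otimes>\<^sub>M S i b) (\<lambda>(y, z). y - z - ?D)"
    using int integrable_distr_eq[OF meas, of "\<lambda>\<eta>. \<eta>"] by (simp add: noise_dist_def)
  then have "(\<integral>\<eta>. \<eta> \<partial>noise_dist S U i a b) = (\<integral>y. (\<integral>z. y - z - ?D \<partial>S i b) \<partial>S i a)"
    unfolding noise_dist_def by (simp add: integral_distr[OF meas] integral_fst'[symmetric])
  also have "\<dots> = (\<integral>y. y - U i b - ?D \<partial>S i a)"
  proof (rule Bochner_Integration.integral_cong[OF refl])
    fix y
    have "(\<integral>z. y - z - ?D \<partial>S i b) = (\<integral>z. (y - ?D) - z \<partial>S i b)" by (simp add: algebra_simps)
    also have "\<dots> = (\<integral>z. y - ?D \<partial>S i b) - (\<integral>z. z \<partial>S i b)"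
      by (rule Bochner_Integration.integral_diff) (use Sb in auto)
    finally show "(\<integral>z. y - z - ?D \<partial>S i b) = y - U i b - ?D"
      using means Sb.prob_space by simp
  qed
  also have "\<dots> = 0"
    using Sa means Sa.prob_space by (simp add: Bochner_Integration.integral_diff)
  finally show ?thesis .
qed

context
  fixes S :: "'p \<Rightarrow> ('p \<Rightarrow> 'b) \<Rightarrow> real measure" and i :: 'p and a b :: "'p \<Rightarrow> 'b"
  assumes Sa: "prob_space (S i a)" "sets (S i a) = sets borel"
    and Sb: "prob_space (S i b)" "sets (S i b) = sets borel"
begin

private abbreviation "samples N \<equiv> PiM {..<N} (\<lambda>_. S i a) \<Otimes>\<^sub>M PiM {..<N} (\<lambda>_. S i b)"

private definition mean_gap :: "nat \<Rightarrow> (nat \<Rightarrow> real) \<times> (nat \<Rightarrow> real) \<Rightarrow> real" where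
  "mean_gap N \<omega> = (\<Sum>k<N. fst \<omega> k) / real N - (\<Sum>k<N. snd \<omega> k) / real N"

private lemma prob_space_samples: "prob_space (samples N)"
  using Sa Sb by (intro prob_space_pair prob_space_PiM) auto

private lemma mean_gap_measurable [measurable]: "mean_gap N \<in> borel_measurable (samples N)"
  using borel_measurable_PiM_sum[OF Sa(2), of N] borel_measurable_PiM_sum[OF Sb(2), of N]
  unfolding mean_gap_def by measurable

private lemma switch_prob_mean_gap:
  "switch_prob S \<tau> N i a b = (\<integral>\<omega>. 1 / (1 + exp (mean_gap N \<omega> / \<tau>)) \<partial>samples N)"
  unfolding switch_prob_def mean_gap_def ..

lemma switch_prob_pos: "0 < switch_prob S \<tau> N i a b"
proof -
  interpret prob_space "samples N" by (rule prob_space_samples)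
  have "0 < (\<integral>\<omega>. 1 / (1 + exp (mean_gap N \<omega> / \<tau>)) \<partial>samples N)"
    by (intro expectation_pos integrable_const_bound[where B=1]) (auto simp: add_pos_pos)
  then show ?thesis by (simp add: switch_prob_mean_gap)
qed

lemma switch_prob_le_1: "switch_prob S \<tau> N i a b \<le> 1"
proof -
  interpret prob_space "samples N" by (rule prob_space_samples)
  have "(\<integral>\<omega>. 1 / (1 + exp (mean_gap N \<omega> / \<tau>)) \<partial>samples N) \<le> (\<integral>\<omega>. 1 \<partial>samples N)"
    by (intro integral_mono integrable_const_bound[where B=1]) (auto simp: add_pos_pos)
  then show ?thesis by (simp add: switch_prob_mean_gap prob_space)
qed

private lemma switch_prob_swap:
  "switch_prob S \<tau> N i b a = (\<integral>\<omega>. 1 / (1 + exp (- mean_gap N \<omega> / \<tau>)) \<partial>samples N)"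
proof -
  interpret pair_sigma_finite "PiM {..<N} (\<lambda>_. S i a)" "PiM {..<N} (\<lambda>_. S i b)"
    using Sa Sb by (simp add: pair_sigma_finite_def prob_space_imp_sigma_finite prob_space_PiM)
  have "(\<integral>\<omega>. 1 / (1 + exp (- mean_gap N \<omega> / \<tau>)) \<partial>samples N)
      = (\<integral>(x, y). 1 / (1 + exp (- mean_gap N (y, x) / \<tau>))
           \<partial>(PiM {..<N} (\<lambda>_. S i b) \<Otimes>\<^sub>M PiM {..<N} (\<lambda>_. S i a)))"
    by (rule integral_product_swap[symmetric]) measurable
  also have "\<dots> = switch_prob S \<tau> N i b a"
    unfolding switch_prob_def mean_gap_def by (simp add: case_prod_beta' minus_diff_eq)
  finally show ?thesis ..
qed

private lemma exp_mean_gap_moment: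
  assumes \<tau>: "0 < \<tau>" and N: "1 \<le> N"
    and int: "integrable (noise_dist S U i a b) (\<lambda>\<eta>. exp (- 1 / (real N * \<tau>) * \<eta>))"
  defines "f \<equiv> \<lambda>\<omega>. exp (- (mean_gap N \<omega> - (U i a - U i b)) / \<tau>)"
  shows "integrable (samples N) f" "(\<integral>\<omega>. f \<omega> \<partial>samples N) = mgf (noise_dist S U i a b) (- 1 / (real N * \<tau>)) ^ N"
proof -
  let ?m = "mgf (noise_dist S U i a b) (- 1 / (real N * \<tau>))"
  have f_sums: "f \<omega> = exp (- 1 / (real N * \<tau>)
      * ((\<Sum>k<N. fst \<omega> k) - (\<Sum>k<N. snd \<omega> k) - real N * (U i a - U i b)))" for \<omega>
    using N \<tau> by (simp add: f_def mean_gap_def field_simps)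
  have "(\<integral>\<^sup>+\<omega>. ennreal (f \<omega>) \<partial>samples N)
      = (\<integral>\<^sup>+\<eta>. ennreal (exp (- 1 / (real N * \<tau>) * \<eta>)) \<partial>noise_dist S U i a b) ^ N"
    unfolding f_sums noise_dist_def by (rule nn_integral_exp_sample_sums[OF Sa Sb])
  also have "\<dots> = ennreal (?m ^ N)"
    using nn_integral_eq_integral[OF int] by (simp add: mgf_def ennreal_power)
  finally have nn_f: "(\<integral>\<^sup>+\<omega>. ennreal (f \<omega>) \<partial>samples N) = ennreal (?m ^ N)" .
  then show "integrable (samples N) f"
    by (intro integrableI_nn_integral_finite[OF _ _ nn_f]) (auto simp: f_def)
  have "0 \<le> ?m" unfolding mgf_def by (simp add: integral_nonneg)
  then show "(\<integral>\<omega>. f \<omega> \<partial>samples N) = ?m ^ N"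
    using nn_f by (subst integral_eq_nn_integral) (auto simp: f_def)
qed

lemma switch_prob_odds_le:
  assumes "0 < \<tau>" "1 \<le> N"
    and "integrable (noise_dist S U i a b) (\<lambda>\<eta>. exp (- 1 / (real N * \<tau>) * \<eta>))"
  shows "exp ((U i a - U i b) / \<tau>) * switch_prob S \<tau> N i a b
       \<le> mgf (noise_dist S U i a b) (- 1 / (real N * \<tau>)) ^ N * switch_prob S \<tau> N i b a"
proof -
  interpret prob_space "samples N" by (rule prob_space_samples)
  define D where "D = U i a - U i b"
  define K where "K = mgf (noise_dist S U i a b) (- 1 / (real N * \<tau>)) ^ N"
  define f where "f t = exp (- (t - D) / \<tau>)" for t
  define g where "g t = 1 / (1 + exp (- t / \<tau>))" for t
  have int_f: "integrable (samples N) (\<lambda>\<omega>. f (mean_gap N \<omega>))"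
    and E_f: "expectation (\<lambda>\<omega>. f (mean_gap N \<omega>)) = K"
    using exp_mean_gap_moment[OF assms] by (simp_all add: f_def D_def K_def)
  have "0 < K" using expectation_pos[OF int_f] E_f by (simp add: f_def)
  then have level: "f (D - \<tau> * ln K) = K" using \<open>0 < \<tau>\<close> by (simp add: f_def)
  have mono: "antimono f" "mono g"
    using \<open>0 < \<tau>\<close> by (auto simp: f_def g_def antimono_def mono_def divide_right_mono add_pos_pos
        intro!: divide_left_mono)
  have odds: "exp (D / \<tau>) * (1 / (1 + exp (t / \<tau>))) = f t * g t" for t
    by (simp add: f_def g_def field_simps exp_minus exp_add[symmetric] add_divide_distrib[symmetric])
  have "exp (D / \<tau>) * switch_prob S \<tau> N i a b = expectation (\<lambda>\<omega>. f (mean_gap N \<omega>) * g (mean_gap N \<omega>))"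
    unfolding switch_prob_mean_gap odds[symmetric] by (rule integral_mult_right_zero[symmetric])
  also have "\<dots> \<le> expectation (\<lambda>\<omega>. f (mean_gap N \<omega>)) * expectation (\<lambda>\<omega>. g (mean_gap N \<omega>))"
    using antimono_mono_crossing[OF mono, of _ "D - \<tau> * ln K"] level E_f
    by (intro expectation_mult_le_of_crossing[OF int_f, where B=1]) (auto simp: g_def add_pos_pos)
  also have "\<dots> = K * switch_prob S \<tau> N i b a"
    by (simp add: E_f switch_prob_swap g_def)
  finally show ?thesis by (simp add: D_def K_def)
qed

end

section \<open>Zero-mean noise with finite moment generating function\<close>

lemma exp_le_taylor2: "exp (x::real) \<le> 1 + x + x\<^sup>2 * exp \<bar>x\<bar>"
proof -
  obtain t where t: "\<bar>t\<bar> \<le> \<bar>x\<bar>" "exp x = (\<Sum>m<2. x ^ m / fact m) + exp t / fact 2 * x ^ 2"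
    using Maclaurin_exp_le[of x 2] by blast
  have "exp t \<le> exp \<bar>x\<bar>" using t(1) by simp
  then have "exp t / 2 \<le> exp \<bar>x\<bar>" using exp_gt_zero[of t] by linarith
  then have "exp t / 2 * x\<^sup>2 \<le> exp \<bar>x\<bar> * x\<^sup>2" by (rule mult_right_mono) simp
  moreover have "exp x = 1 + x + exp t / 2 * x\<^sup>2" using t(2) by (simp add: numeral_2_eq_2)
  ultimately show ?thesis by (simp add: mult.commute)
qed

lemma square_le_exp_abs: "(y::real)\<^sup>2 \<le> 4 * exp \<bar>y\<bar>"
proof -
  have "\<bar>y\<bar> / 2 \<le> exp (\<bar>y\<bar> / 2)" using exp_ge_add_one_self[of "\<bar>y\<bar> / 2"] by linarith
  then have "(\<bar>y\<bar> / 2)\<^sup>2 \<le> (exp (\<bar>y\<bar> / 2))\<^sup>2" by (intro power_mono) auto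
  then show ?thesis by (simp add: power_divide power2_eq_square exp_add[symmetric])
qed

locale centered_noise = prob_space \<nu> for \<nu> :: "real measure" +
  assumes sets_eq_borel: "sets \<nu> = sets borel"
    and integrable_id: "integrable \<nu> (\<lambda>\<eta>. \<eta>)"
    and mean_zero: "expectation (\<lambda>\<eta>. \<eta>) = 0"
    and integrable_exp: "integrable \<nu> (\<lambda>\<eta>. exp (\<theta> * \<eta>))"
begin

lemma measurable_from_borel [measurable]: "f \<in> borel_measurable borel \<Longrightarrow> f \<in> borel_measurable \<nu>"
  by (simp add: measurable_cong_sets[OF sets_eq_borel refl])

lemma space_eq_UNIV: "space \<nu> = UNIV"
  using sets_eq_imp_space_eq[OF sets_eq_borel] by simp

lemma mgf_pos: "0 < mgf \<nu> \<theta>"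
  unfolding mgf_def by (rule expectation_pos[OF integrable_exp]) simp

lemma mgf_ge_1: "1 \<le> mgf \<nu> \<theta>"
proof -
  have "expectation (\<lambda>\<eta>. 1 + \<theta> * \<eta>) \<le> mgf \<nu> \<theta>"
    unfolding mgf_def by (rule integral_mono) (use integrable_id integrable_exp in auto)
  then show ?thesis using integrable_id mean_zero by (simp add: prob_space)
qed

lemma mgf_eq_1_if_degenerate: "AE \<eta> in \<nu>. \<eta> = 0 \<Longrightarrow> mgf \<nu> \<theta> = 1"
  unfolding mgf_def by (subst integral_cong_AE[where g="\<lambda>_. 1"]) (auto simp: prob_space)

lemma mgf_gt_1:
  assumes nondegenerate: "\<not> (AE \<eta> in \<nu>. \<eta> = 0)" and "\<theta> \<noteq> 0"
  shows "1 < mgf \<nu> \<theta>"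
proof -
  let ?g = "\<lambda>\<eta>. exp (\<theta> * \<eta>) - 1 - \<theta> * \<eta>"
  have int: "integrable \<nu> ?g" using integrable_id integrable_exp by auto
  have nonneg: "AE \<eta> in \<nu>. 0 \<le> ?g \<eta>"
    using exp_ge_add_one_self by (intro AE_I2) (simp add: algebra_simps)
  have zero: "\<eta> = 0" if "?g \<eta> = 0" for \<eta>
    using that exp_minus_greater[of "- (\<theta> * \<eta>)"] \<open>\<theta> \<noteq> 0\<close> by auto
  have "expectation ?g \<noteq> 0"
  proof
    assume "expectation ?g = 0"
    then have "AE \<eta> in \<nu>. ?g \<eta> = 0" using integral_nonneg_eq_0_iff_AE[OF int nonneg] by simp
    then have "AE \<eta> in \<nu>. \<eta> = 0" by (rule AE_mp) (simp add: zero)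
    then show False using nondegenerate by simp
  qed
  moreover have "expectation ?g = mgf \<nu> \<theta> - 1"
    using integrable_id integrable_exp mean_zero by (simp add: mgf_def prob_space)
  ultimately show ?thesis using mgf_ge_1[of \<theta>] by linarith
qed

lemma mgf_mono_nonneg:
  assumes "0 \<le> \<delta>" "\<delta> \<le> \<theta>"
  shows "mgf \<nu> \<delta> \<le> mgf \<nu> \<theta>"
proof -
  have "exp (\<delta> * \<eta>) + (\<theta> - \<delta>) * \<eta> \<le> exp (\<theta> * \<eta>)" for \<eta>
  proof -
    have "0 \<le> ((\<theta> - \<delta>) * \<eta>) * (exp (\<delta> * \<eta>) - 1)"
    proof (cases "0 \<le> \<eta>")
      case True
      then show ?thesis using assms by (intro mult_nonneg_nonneg) auto
    next
      case False
      then show ?thesis using assms by (intro mult_nonpos_nonpos) (auto simp: mult_nonneg_nonpos)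
    qed
    moreover have "exp (\<delta> * \<eta>) * (1 + (\<theta> - \<delta>) * \<eta>) \<le> exp (\<delta> * \<eta>) * exp ((\<theta> - \<delta>) * \<eta>)"
      by (intro mult_left_mono exp_ge_add_one_self) simp
    ultimately show ?thesis by (simp add: algebra_simps exp_add[symmetric])
  qed
  then have "expectation (\<lambda>\<eta>. exp (\<delta> * \<eta>) + (\<theta> - \<delta>) * \<eta>) \<le> mgf \<nu> \<theta>"
    unfolding mgf_def by (intro integral_mono) (use integrable_exp integrable_id in auto)
  then show ?thesis using integrable_exp integrable_id mean_zero by (simp add: mgf_def)
qed

lemma positive_tail:
  assumes nondegenerate: "\<not> (AE \<eta> in \<nu>. \<eta> = 0)"
  shows "\<exists>t>0. 0 < prob {\<eta>. t \<le> \<eta>}"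
proof (rule ccontr)
  assume "\<not> (\<exists>t>0. 0 < prob {\<eta>. t \<le> \<eta>})"
  then have "prob {\<eta>. t \<le> \<eta>} = 0" if "0 < t" for t
    using that measure_nonneg[of \<nu> "{\<eta>. t \<le> \<eta>}"] by (meson order.antisym not_le)
  then have "AE \<eta> in \<nu>. \<eta> \<notin> {\<eta>. 1 / Suc n \<le> \<eta>}" for n :: nat
    by (intro prob_eq_0[THEN iffD1]) (auto simp: sets_eq_borel)
  then have "AE \<eta> in \<nu>. \<forall>n::nat. \<not> 1 / Suc n \<le> \<eta>" by (simp add: AE_all_countable)
  then have nonpos: "AE \<eta> in \<nu>. 0 \<le> - \<eta>"
  proof (rule AE_mp, intro AE_I2 impI)
    fix \<eta> :: real assume below: "\<forall>n::nat. \<not> 1 / Suc n \<le> \<eta>"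
    show "0 \<le> - \<eta>"
    proof (rule ccontr)
      assume "\<not> 0 \<le> - \<eta>"
      then obtain n :: nat where "0 < n" "inverse (real n) < \<eta>"
        using ex_inverse_of_nat_less[of \<eta>] by auto
      then show False using below[rule_format, of "n - 1"] by (simp add: inverse_eq_divide)
    qed
  qed
  have "expectation (\<lambda>\<eta>. - \<eta>) = 0" using mean_zero by (simp add: Bochner_Integration.integral_minus)
  then have "AE \<eta> in \<nu>. \<eta> = 0"
    using integral_nonneg_eq_0_iff_AE[OF _ nonpos] integrable_id by simp
  then show False using nondegenerate by simp
qed

lemma mgf_ge_tail:
  assumes "0 \<le> \<theta>"
  shows "exp (\<theta> * t) * prob {\<eta>. t \<le> \<eta>} \<le> mgf \<nu> \<theta>"
proof -
  have "expectation (\<lambda>\<eta>. exp (\<theta> * t) * indicator {\<eta>. t \<le> \<eta>} \<eta>) \<le> mgf \<nu> \<theta>"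
    unfolding mgf_def
  proof (rule integral_mono)
    show "integrable \<nu> (\<lambda>\<eta>. exp (\<theta> * t) * indicator {\<eta>. t \<le> \<eta>} \<eta>)"
      by (intro integrable_mult_right integrable_real_indicator)
        (auto simp: sets_eq_borel less_top[symmetric])
    show "exp (\<theta> * t) * indicator {\<eta>. t \<le> \<eta>} \<eta> \<le> exp (\<theta> * \<eta>)" for \<eta>
      using assms by (cases "t \<le> \<eta>") (auto simp: mult_left_mono)
  qed (rule integrable_exp)
  then show ?thesis by (simp add: space_eq_UNIV)
qed

definition mgf_quad_const :: real where
  "mgf_quad_const = expectation (\<lambda>\<eta>. \<eta>\<^sup>2 * exp \<bar>\<eta>\<bar>)"

lemma integrable_square_exp_abs: "integrable \<nu> (\<lambda>\<eta>. \<eta>\<^sup>2 * exp \<bar>\<eta>\<bar>)"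
proof (rule Bochner_Integration.integrable_bound)
  show "integrable \<nu> (\<lambda>\<eta>. 4 * (exp (2 * \<eta>) + exp (- 2 * \<eta>)))"
    by (intro integrable_mult_right Bochner_Integration.integrable_add integrable_exp)
  have "\<eta>\<^sup>2 * exp \<bar>\<eta>\<bar> \<le> 4 * (exp (2 * \<eta>) + exp (- 2 * \<eta>))" for \<eta> :: real
  proof -
    have "\<eta>\<^sup>2 * exp \<bar>\<eta>\<bar> \<le> 4 * exp \<bar>\<eta>\<bar> * exp \<bar>\<eta>\<bar>"
      using square_le_exp_abs[of \<eta>] by (intro mult_right_mono) auto
    also have "\<dots> = 4 * exp (2 * \<bar>\<eta>\<bar>)" by (simp add: exp_add[symmetric])
    also have "\<dots> \<le> 4 * (exp (2 * \<eta>) + exp (- 2 * \<eta>))" by (cases "0 \<le> \<eta>") auto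
    finally show ?thesis .
  qed
  then show "AE \<eta> in \<nu>. norm (\<eta>\<^sup>2 * exp \<bar>\<eta>\<bar>) \<le> norm (4 * (exp (2 * \<eta>) + exp (- 2 * \<eta>)))"
    by (intro AE_I2) (simp add: add_pos_pos)
qed measurable

lemma mgf_quad_const_nonneg: "0 \<le> mgf_quad_const"
  unfolding mgf_quad_const_def by (rule Bochner_Integration.integral_nonneg) simp

lemma mgf_le_quadratic:
  assumes "\<bar>\<theta>\<bar> \<le> 1"
  shows "mgf \<nu> \<theta> \<le> 1 + mgf_quad_const * \<theta>\<^sup>2"
proof -
  have "exp (\<theta> * \<eta>) \<le> 1 + \<theta> * \<eta> + \<theta>\<^sup>2 * (\<eta>\<^sup>2 * exp \<bar>\<eta>\<bar>)" for \<eta>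
  proof -
    have "exp \<bar>\<theta> * \<eta>\<bar> \<le> exp \<bar>\<eta>\<bar>"
      using assms by (simp add: abs_mult mult_left_le_one_le)
    then have "\<theta>\<^sup>2 * (\<eta>\<^sup>2 * exp \<bar>\<theta> * \<eta>\<bar>) \<le> \<theta>\<^sup>2 * (\<eta>\<^sup>2 * exp \<bar>\<eta>\<bar>)"
      by (intro mult_left_mono) auto
    then have "(\<theta> * \<eta>)\<^sup>2 * exp \<bar>\<theta> * \<eta>\<bar> \<le> \<theta>\<^sup>2 * (\<eta>\<^sup>2 * exp \<bar>\<eta>\<bar>)"
      by (simp add: power_mult_distrib mult.assoc)
    then show ?thesis using exp_le_taylor2[of "\<theta> * \<eta>"] by linarith
  qed
  then have "mgf \<nu> \<theta> \<le> expectation (\<lambda>\<eta>. 1 + \<theta> * \<eta> + \<theta>\<^sup>2 * (\<eta>\<^sup>2 * exp \<bar>\<eta>\<bar>))"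
    unfolding mgf_def
    by (intro integral_mono) (use integrable_exp integrable_id integrable_square_exp_abs in auto)
  also have "\<dots> = 1 + mgf_quad_const * \<theta>\<^sup>2"
    using integrable_id integrable_square_exp_abs mean_zero
    by (simp add: mgf_quad_const_def prob_space)
  finally show ?thesis .
qed

lemma mgf_power_le_exp:
  assumes "1 \<le> real N * \<tau>" "0 < \<tau>"
  shows "mgf \<nu> (- 1 / (real N * \<tau>)) ^ N \<le> exp (mgf_quad_const / (real N * \<tau>\<^sup>2))"
proof -
  let ?\<theta> = "- 1 / (real N * \<tau>)"
  have "0 < real N" using assms by (auto intro: ccontr)
  then have "\<bar>?\<theta>\<bar> \<le> 1" using assms by (simp add: abs_div)
  then have "mgf \<nu> ?\<theta> \<le> exp (mgf_quad_const * ?\<theta>\<^sup>2)"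
    using mgf_le_quadratic exp_ge_add_one_self order_trans by blast
  then have "mgf \<nu> ?\<theta> ^ N \<le> exp (mgf_quad_const * ?\<theta>\<^sup>2) ^ N"
    using mgf_pos less_imp_le power_mono by blast
  also have "\<dots> = exp (mgf_quad_const / (real N * \<tau>\<^sup>2))"
    using \<open>0 < real N\<close> assms by (simp add: exp_of_nat_mult[symmetric] field_simps power2_eq_square)
  finally show ?thesis .
qed

lemma max_rate_pos:
  assumes "0 < r" and max: "\<forall>\<theta>. \<theta> * r - ln (mgf \<nu> \<theta>) \<le> \<theta>\<^sub>0 * r - ln (mgf \<nu> \<theta>\<^sub>0)"
  shows "0 < \<theta>\<^sub>0 * r - ln (mgf \<nu> \<theta>\<^sub>0)"
proof -
  let ?C = mgf_quad_const
  define \<theta> where "\<theta> = min 1 (r / (2 * (?C + 1)))"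
  have C: "0 \<le> ?C" by (rule mgf_quad_const_nonneg)
  have \<theta>: "0 < \<theta>" "\<bar>\<theta>\<bar> \<le> 1" using C \<open>0 < r\<close> by (auto simp: \<theta>_def)
  have "(?C + 1) * \<theta> \<le> (?C + 1) * (r / (2 * (?C + 1)))"
    using C by (intro mult_left_mono) (auto simp: \<theta>_def)
  also have "\<dots> = r / 2" using C by (simp add: field_simps)
  finally have \<theta>_small: "(?C + 1) * \<theta> \<le> r / 2" .
  have "ln (mgf \<nu> \<theta>) \<le> ln (1 + ?C * \<theta>\<^sup>2)"
    using mgf_le_quadratic[OF \<theta>(2)] mgf_pos[of \<theta>] by simp
  also have "\<dots> \<le> ?C * \<theta>\<^sup>2" using C by (intro ln_add_one_self_le_self) simp
  also have "\<dots> \<le> (?C + 1) * \<theta> * \<theta>" using \<theta> by (simp add: power2_eq_square mult_right_mono)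
  also have "\<dots> \<le> r / 2 * \<theta>" using \<theta> \<theta>_small by (intro mult_right_mono) auto
  finally have "ln (mgf \<nu> \<theta>) \<le> r / 2 * \<theta>" .
  moreover have "0 < r / 2 * \<theta>" "\<theta> * r = 2 * (r / 2 * \<theta>)" using \<theta>(1) \<open>0 < r\<close> by simp_all
  ultimately have "0 < \<theta> * r - ln (mgf \<nu> \<theta>)" by linarith
  then show ?thesis using max by (meson order_less_le_trans)
qed

lemma tail_bounds_maximizer:
  assumes "0 \<le> \<theta>\<^sub>0" "2 * r \<le> t" "0 < prob {\<eta>. t \<le> \<eta>}" and below: "ln (mgf \<nu> \<theta>\<^sub>0) < \<theta>\<^sub>0 * r"
  shows "\<theta>\<^sub>0 * t < - 2 * ln (prob {\<eta>. t \<le> \<eta>})"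
proof -
  let ?p = "prob {\<eta>. t \<le> \<eta>}"
  have "ln (exp (\<theta>\<^sub>0 * t) * ?p) \<le> ln (mgf \<nu> \<theta>\<^sub>0)"
    using mgf_ge_tail[OF assms(1), of t] assms(3) mgf_pos[of \<theta>\<^sub>0] by (subst ln_le_cancel_iff) simp_all
  then have "\<theta>\<^sub>0 * t + ln ?p < \<theta>\<^sub>0 * r" using below assms(3) by (simp add: ln_mult)
  moreover have "\<theta>\<^sub>0 * r \<le> \<theta>\<^sub>0 * t / 2" using assms(1,2) mult_left_mono[of r "t / 2" \<theta>\<^sub>0] by simp
  ultimately show ?thesis by linarith
qed

text \<open>A maximizer theta0 \<ge> eps has ln mgf theta0 \<ge> ln mgf eps > 0, while the tail bound
  keeps it below a constant T; both contradict ln mgf theta0 < theta0 r once r < m / T.\<close>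
lemma max_rate_maximizer_small:
  assumes nondegenerate: "\<not> (AE \<eta> in \<nu>. \<eta> = 0)" and "0 < \<epsilon>"
  shows "\<exists>r\<^sub>0>0. \<forall>r \<theta>\<^sub>0. 0 < r \<longrightarrow> r < r\<^sub>0 \<longrightarrow>
           (\<forall>\<theta>. \<theta> * r - ln (mgf \<nu> \<theta>) \<le> \<theta>\<^sub>0 * r - ln (mgf \<nu> \<theta>\<^sub>0)) \<longrightarrow> \<theta>\<^sub>0 < \<epsilon>"
proof -
  obtain t where t: "0 < t" "0 < prob {\<eta>. t \<le> \<eta>}" using positive_tail[OF nondegenerate] by blast
  define p where "p = prob {\<eta>. t \<le> \<eta>}"
  define m where "m = ln (mgf \<nu> \<epsilon>)"
  define T where "T = - 2 * ln p / t + \<epsilon>"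
  have p: "0 < p" "ln p \<le> 0" using t by (simp_all add: p_def)
  have m: "0 < m" unfolding m_def using mgf_gt_1[OF nondegenerate, of \<epsilon>] \<open>0 < \<epsilon>\<close> by (simp add: ln_gt_zero)
  have "0 \<le> - 2 * ln p / t" using p t by (intro divide_nonneg_pos) auto
  then have T: "0 < T" unfolding T_def using \<open>0 < \<epsilon>\<close> by linarith
  show ?thesis
  proof (intro exI[of _ "min (t / 2) (m / T)"] conjI allI impI)
    fix r \<theta>\<^sub>0 assume r: "0 < r" "r < min (t / 2) (m / T)"
      and max: "\<forall>\<theta>. \<theta> * r - ln (mgf \<nu> \<theta>) \<le> \<theta>\<^sub>0 * r - ln (mgf \<nu> \<theta>\<^sub>0)"
    have below: "ln (mgf \<nu> \<theta>\<^sub>0) < \<theta>\<^sub>0 * r" using max_rate_pos[OF r(1) max] by simp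
    show "\<theta>\<^sub>0 < \<epsilon>"
    proof (rule ccontr)
      assume "\<not> \<theta>\<^sub>0 < \<epsilon>"
      then have "\<epsilon> \<le> \<theta>\<^sub>0" by simp
      have "\<theta>\<^sub>0 * t < - 2 * ln p"
        unfolding p_def using r \<open>\<epsilon> \<le> \<theta>\<^sub>0\<close> \<open>0 < \<epsilon>\<close> t(2) below by (intro tail_bounds_maximizer) auto
      then have "\<theta>\<^sub>0 < - 2 * ln p / t" using t by (simp add: field_simps)
      then have "\<theta>\<^sub>0 < T" using \<open>0 < \<epsilon>\<close> by (simp add: T_def)
      have "m \<le> ln (mgf \<nu> \<theta>\<^sub>0)"
        unfolding m_def using mgf_mono_nonneg[of \<epsilon> \<theta>\<^sub>0] \<open>\<epsilon> \<le> \<theta>\<^sub>0\<close> \<open>0 < \<epsilon>\<close> mgf_pos[of \<epsilon>] by simp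
      also have "\<dots> < \<theta>\<^sub>0 * r" by (rule below)
      also have "\<dots> \<le> T * r" using \<open>\<theta>\<^sub>0 < T\<close> r by (simp add: mult_right_mono)
      also have "\<dots> < m" using r T by (simp add: field_simps)
      finally have "m < m" .
      then show False by simp
    qed
  qed (use t m T in auto)
qed

end

lemma sample_rate_if_bounded:
  fixes Nf :: "real \<Rightarrow> nat"
  assumes "0 < ell" "0 < \<xi>" "\<xi> < 1"
    and N: "\<forall>\<tau>>0. real (Nf \<tau>) \<ge> (ln (4 / \<xi>) + 2 / \<tau>) * ell\<^sup>2 / (2 * (1 - \<xi>)\<^sup>2 * \<tau>\<^sup>2)"
  shows "((\<lambda>\<tau>. 1 / (real (Nf \<tau>) * \<tau>\<^sup>2)) \<longlongrightarrow> 0) (at_right 0)"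
proof (rule tendsto_sandwich[where f="\<lambda>_. 0" and h="\<lambda>\<tau>. (1 - \<xi>)\<^sup>2 / ell\<^sup>2 * \<tau>"])
  define q where "q = (1 - \<xi>)\<^sup>2"
  have q: "0 < q" using assms by (simp add: q_def)
  show "eventually (\<lambda>\<tau>. 1 / (real (Nf \<tau>) * \<tau>\<^sup>2) \<le> (1 - \<xi>)\<^sup>2 / ell\<^sup>2 * \<tau>) (at_right 0)"
    using eventually_at_right_less[of 0]
  proof eventually_elim
    fix \<tau> :: real assume \<tau>: "0 < \<tau>"
    have "ell\<^sup>2 / (q * \<tau> ^ 3) = (2 / \<tau>) * ell\<^sup>2 / (2 * q * \<tau>\<^sup>2)"
      using \<tau> q by (simp add: field_simps power2_eq_square power3_eq_cube)
    also have "\<dots> \<le> (ln (4 / \<xi>) + 2 / \<tau>) * ell\<^sup>2 / (2 * q * \<tau>\<^sup>2)"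
      using assms \<tau> q by (intro divide_right_mono mult_right_mono) auto
    also have "\<dots> \<le> real (Nf \<tau>)" using N \<tau> unfolding q_def by auto
    finally have le: "ell\<^sup>2 / (q * \<tau> ^ 3) * \<tau>\<^sup>2 \<le> real (Nf \<tau>) * \<tau>\<^sup>2"
      by (rule mult_right_mono) simp
    have pos: "0 < ell\<^sup>2 / (q * \<tau> ^ 3) * \<tau>\<^sup>2" using assms q \<tau> by simp
    have "1 / (real (Nf \<tau>) * \<tau>\<^sup>2) \<le> 1 / (ell\<^sup>2 / (q * \<tau> ^ 3) * \<tau>\<^sup>2)"
      by (rule divide_left_mono[OF le _ mult_pos_pos[OF less_le_trans[OF pos le] pos]]) simp
    also have "\<dots> = q / ell\<^sup>2 * \<tau>" using \<tau> assms q by (simp add: field_simps power2_eq_square power3_eq_cube)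
    finally show "1 / (real (Nf \<tau>) * \<tau>\<^sup>2) \<le> (1 - \<xi>)\<^sup>2 / ell\<^sup>2 * \<tau>" unfolding q_def .
  qed
  show "((\<lambda>\<tau>. (1 - \<xi>)\<^sup>2 / ell\<^sup>2 * \<tau>) \<longlongrightarrow> 0) (at_right 0)"
    by (rule tendsto_eq_intros) (auto intro: tendsto_ident_at)
qed (auto intro: eventually_at_right_less)

context centered_noise
begin

lemma mgf_power_tendsto_1:
  fixes Nf :: "real \<Rightarrow> nat"
  assumes Npos: "\<forall>\<tau>>0. 1 \<le> Nf \<tau>"
    and rate: "((\<lambda>\<tau>. 1 / (real (Nf \<tau>) * \<tau>\<^sup>2)) \<longlongrightarrow> 0) (at_right 0)"
  shows "((\<lambda>\<tau>. mgf \<nu> (- 1 / (real (Nf \<tau>) * \<tau>)) ^ Nf \<tau>) \<longlongrightarrow> 1) (at_right 0)"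
proof (rule tendsto_sandwich[where f="\<lambda>_. 1"])
  let ?h = "\<lambda>\<tau>. exp (mgf_quad_const * (1 / (real (Nf \<tau>) * \<tau>\<^sup>2)))"
  show "eventually (\<lambda>\<tau>. 1 \<le> mgf \<nu> (- 1 / (real (Nf \<tau>) * \<tau>)) ^ Nf \<tau>) (at_right 0)"
    by (simp add: mgf_ge_1 one_le_power)
  have "eventually (\<lambda>\<tau>::real. \<tau> < 1) (at_right 0)"
    unfolding eventually_at_right_field by (intro exI[of _ 1]) auto
  then show "eventually (\<lambda>\<tau>. mgf \<nu> (- 1 / (real (Nf \<tau>) * \<tau>)) ^ Nf \<tau> \<le> ?h \<tau>) (at_right 0)"
    using order_tendstoD(2)[OF rate zero_less_one] eventually_at_right_less[of 0]
  proof eventually_elim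
    case (elim \<tau>)
    then have N: "0 < real (Nf \<tau>)" using Npos by (auto intro: order.strict_trans2)
    have "1 < real (Nf \<tau>) * \<tau>\<^sup>2" using elim N by (simp add: divide_less_eq)
    also have "\<dots> \<le> real (Nf \<tau>) * \<tau>"
      using elim N by (simp add: power2_eq_square mult_left_le_one_le)
    finally show ?case using mgf_power_le_exp[of "Nf \<tau>" \<tau>] elim by simp
  qed
  show "(?h \<longlongrightarrow> 1) (at_right 0)"
    using tendsto_exp[OF tendsto_mult_right_zero[OF rate, of mgf_quad_const]] by simp
qed simp

lemma sample_rate_le_maximizer:
  assumes "0 < c" "0 \<le> L" "0 < \<tau>" "1 \<le> N"
    and max: "\<forall>\<theta>. \<theta> * (c * \<tau>) - ln (mgf \<nu> \<theta>) \<le> \<theta>\<^sub>0 * (c * \<tau>) - ln (mgf \<nu> \<theta>\<^sub>0)"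
    and N: "(L + 2 / \<tau>) / (\<theta>\<^sub>0 * (c * \<tau>) - ln (mgf \<nu> \<theta>\<^sub>0)) \<le> real N"
  shows "1 / (real N * \<tau>\<^sup>2) \<le> \<theta>\<^sub>0 * c / 2"
proof -
  let ?I = "\<theta>\<^sub>0 * (c * \<tau>) - ln (mgf \<nu> \<theta>\<^sub>0)"
  have I: "0 < ?I" using max_rate_pos[OF _ max] assms by simp
  have "?I \<le> \<theta>\<^sub>0 * (c * \<tau>)" using mgf_ge_1[of \<theta>\<^sub>0] by simp
  then have "2 / (\<theta>\<^sub>0 * (c * \<tau>) * \<tau>) \<le> (2 / \<tau>) / ?I"
    using I assms by (simp add: divide_left_mono field_simps mult_pos_pos)
  also have "\<dots> \<le> (L + 2 / \<tau>) / ?I" using I assms by (intro divide_right_mono) auto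
  also have "\<dots> \<le> real N" by (rule N)
  finally have "2 / (\<theta>\<^sub>0 * c * \<tau>\<^sup>2) \<le> real N" by (simp add: power2_eq_square mult_ac)
  moreover have "0 < \<theta>\<^sub>0 * c"
  proof -
    have "0 < \<theta>\<^sub>0 * (c * \<tau>)" using I \<open>?I \<le> \<theta>\<^sub>0 * (c * \<tau>)\<close> by linarith
    moreover have "0 < c * \<tau>" using assms by simp
    ultimately have "0 < \<theta>\<^sub>0" by (simp add: zero_less_mult_iff)
    then show ?thesis using assms by simp
  qed
  ultimately have "1 / (real N * \<tau>\<^sup>2) \<le> 1 / (2 / (\<theta>\<^sub>0 * c * \<tau>\<^sup>2) * \<tau>\<^sup>2)"
    using assms by (intro divide_left_mono mult_right_mono mult_pos_pos) auto
  also have "\<dots> = \<theta>\<^sub>0 * c / 2" using assms by (simp add: field_simps)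
  finally show ?thesis .
qed

lemma sample_rate_if_max_rate:
  fixes Nf :: "real \<Rightarrow> nat" and \<theta>s :: "real \<Rightarrow> real"
  assumes nondegenerate: "\<not> (AE \<eta> in \<nu>. \<eta> = 0)" and "0 < c" "0 \<le> L"
    and Npos: "\<forall>\<tau>>0. 1 \<le> Nf \<tau>"
    and max: "\<forall>\<tau>>0. \<forall>\<theta>. \<theta> * (c * \<tau>) - ln (mgf \<nu> \<theta>) \<le> \<theta>s \<tau> * (c * \<tau>) - ln (mgf \<nu> (\<theta>s \<tau>))"
    and N: "\<forall>\<tau>>0. real (Nf \<tau>) \<ge> (L + 2 / \<tau>) / (\<theta>s \<tau> * (c * \<tau>) - ln (mgf \<nu> (\<theta>s \<tau>)))"
  shows "((\<lambda>\<tau>. 1 / (real (Nf \<tau>) * \<tau>\<^sup>2)) \<longlongrightarrow> 0) (at_right 0)"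
proof (rule order_tendstoI)
  fix a :: real assume "a < 0"
  have "0 \<le> 1 / (real (Nf \<tau>) * \<tau>\<^sup>2)" for \<tau> by simp
  then show "eventually (\<lambda>\<tau>. a < 1 / (real (Nf \<tau>) * \<tau>\<^sup>2)) (at_right 0)"
    using \<open>a < 0\<close> by (intro always_eventually allI) (rule order.strict_trans2)
next
  fix u :: real assume "0 < u"
  obtain r\<^sub>0 where "0 < r\<^sub>0" and small: "\<forall>r \<theta>\<^sub>0. 0 < r \<longrightarrow> r < r\<^sub>0 \<longrightarrow>
      (\<forall>\<theta>. \<theta> * r - ln (mgf \<nu> \<theta>) \<le> \<theta>\<^sub>0 * r - ln (mgf \<nu> \<theta>\<^sub>0)) \<longrightarrow> \<theta>\<^sub>0 < 2 * u / c"
    using max_rate_maximizer_small[OF nondegenerate, of "2 * u / c"] \<open>0 < u\<close> \<open>0 < c\<close> by auto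
  have "eventually (\<lambda>\<tau>. \<tau> < r\<^sub>0 / c) (at_right 0)"
    using \<open>0 < r\<^sub>0\<close> \<open>0 < c\<close> by (simp add: eventually_at_right_field) (auto intro: exI[of _ "r\<^sub>0 / c"])
  then show "eventually (\<lambda>\<tau>. 1 / (real (Nf \<tau>) * \<tau>\<^sup>2) < u) (at_right 0)"
    using eventually_at_right_less[of 0]
  proof eventually_elim
    case (elim \<tau>)
    have "0 < c * \<tau>" "c * \<tau> < r\<^sub>0" using elim \<open>0 < c\<close> by (auto simp: field_simps)
    then have "\<theta>s \<tau> < 2 * u / c" using small max elim by blast
    then have "\<theta>s \<tau> * c / 2 < u" using \<open>0 < c\<close> by (simp add: field_simps)
    moreover have "1 / (real (Nf \<tau>) * \<tau>\<^sup>2) \<le> \<theta>s \<tau> * c / 2"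
      using max N Npos elim assms(2,3) by (intro sample_rate_le_maximizer) auto
    ultimately show ?case by linarith
  qed
qed

lemma mgf_power_tendsto_1_if_bounded:
  fixes Nf :: "real \<Rightarrow> nat"
  assumes bounded: "AE \<eta> in \<nu>. c \<le> \<eta> \<and> \<eta> \<le> c + ell" and "0 < \<xi>" "\<xi> < 1"
    and Npos: "\<forall>\<tau>>0. 1 \<le> Nf \<tau>"
    and N: "\<forall>\<tau>>0. real (Nf \<tau>) \<ge> (ln (4 / \<xi>) + 2 / \<tau>) * ell\<^sup>2 / (2 * (1 - \<xi>)\<^sup>2 * \<tau>\<^sup>2)"
  shows "((\<lambda>\<tau>. mgf \<nu> (- 1 / (real (Nf \<tau>) * \<tau>)) ^ Nf \<tau>) \<longlongrightarrow> 1) (at_right 0)"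
proof (cases "0 < ell")
  case True
  then show ?thesis
    using mgf_power_tendsto_1[OF Npos sample_rate_if_bounded] assms by blast
next
  case False
  have const: "AE \<eta> in \<nu>. \<eta> = c"
    using bounded by (rule AE_mp) (use False in \<open>auto intro!: AE_I2\<close>)
  then have "c = 0"
    using integral_cong_AE[of "\<lambda>\<eta>. \<eta>" \<nu> "\<lambda>_. c"] mean_zero by (simp add: prob_space)
  then show ?thesis using const mgf_eq_1_if_degenerate by simp
qed

lemma mgf_power_tendsto_1_if_max_rate:
  fixes Nf :: "real \<Rightarrow> nat" and M \<theta>s :: "real \<Rightarrow> real"
  assumes "0 < \<xi>" "\<xi> < 1" and Npos: "\<forall>\<tau>>0. 1 \<le> Nf \<tau>" and M: "\<And>\<theta>. M \<theta> = mgf \<nu> \<theta>"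
    and max: "\<forall>\<tau>>0. \<forall>\<theta>. \<theta> * (1 - \<xi>) * \<tau> - ln (M \<theta>) \<le> \<theta>s \<tau> * (1 - \<xi>) * \<tau> - ln (M (\<theta>s \<tau>))"
    and N: "\<forall>\<tau>>0. real (Nf \<tau>) \<ge> (ln (4 / \<xi>) + 2 / \<tau>) / ln (exp (\<theta>s \<tau> * (1 - \<xi>) * \<tau>) / M (\<theta>s \<tau>))"
  shows "((\<lambda>\<tau>. mgf \<nu> (- 1 / (real (Nf \<tau>) * \<tau>)) ^ Nf \<tau>) \<longlongrightarrow> 1) (at_right 0)"
proof (rule mgf_power_tendsto_1[OF Npos sample_rate_if_max_rate])
  show "\<not> (AE \<eta> in \<nu>. \<eta> = 0)"
  proof
    assume "AE \<eta> in \<nu>. \<eta> = 0"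
    then have "M \<theta> = 1" for \<theta> using M mgf_eq_1_if_degenerate by simp
    then show False using max[rule_format, of 1 "\<theta>s 1 + 1"] \<open>\<xi> < 1\<close> by (simp add: algebra_simps)
  qed
  show "\<forall>\<tau>>0. \<forall>\<theta>. \<theta> * ((1 - \<xi>) * \<tau>) - ln (mgf \<nu> \<theta>)
      \<le> \<theta>s \<tau> * ((1 - \<xi>) * \<tau>) - ln (mgf \<nu> (\<theta>s \<tau>))"
    using max by (simp add: M mult.assoc)
  show "\<forall>\<tau>>0. (ln (4 / \<xi>) + 2 / \<tau>) / (\<theta>s \<tau> * ((1 - \<xi>) * \<tau>) - ln (mgf \<nu> (\<theta>s \<tau>))) \<le> real (Nf \<tau>)"
  proof -
    have "ln (exp (\<theta>s \<tau> * (1 - \<xi>) * \<tau>) / M (\<theta>s \<tau>))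
        = \<theta>s \<tau> * ((1 - \<xi>) * \<tau>) - ln (mgf \<nu> (\<theta>s \<tau>))" for \<tau>
      using mgf_pos[of "\<theta>s \<tau>"] by (subst ln_div) (simp_all add: M mult.assoc)
    then show ?thesis using N by simp
  qed
qed (use assms in auto)

end

section \<open>The BLLA chain\<close>

lemma profiles_update: "a \<in> profiles Xs \<Longrightarrow> x \<in> Xs i \<Longrightarrow> a(i := x) \<in> profiles Xs"
  unfolding profiles_def by (auto simp: PiE_def extensional_def)

lemma profiles_mem: "a \<in> profiles Xs \<Longrightarrow> a i \<in> Xs i"
  unfolding profiles_def by auto

lemma finite_profiles: "(\<And>i. finite (Xs i)) \<Longrightarrow> finite (profiles (Xs :: 'p::finite \<Rightarrow> 'b set))"
  unfolding profiles_def by (intro finite_PiE) auto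

lemma fun_upd_self_eq_sym: "b = a(i := b i) \<longleftrightarrow> a = b(i := a i)"
  by (metis fun_upd_triv fun_upd_upd)

lemma fun_upd_eq_iff: "a(i := x) = b \<longleftrightarrow> x = b i \<and> b = a(i := b i)"
  by (metis fun_upd_same fun_upd_upd)

locale blla_chain =
  fixes Xs :: "'p::finite \<Rightarrow> 'b set" and S :: "'p \<Rightarrow> ('p \<Rightarrow> 'b) \<Rightarrow> real measure"
  assumes finite_actions: "\<And>i. finite (Xs i)" and actions_nonempty: "\<And>i. Xs i \<noteq> {}"
    and prob_space_S: "\<And>i a. a \<in> profiles Xs \<Longrightarrow> prob_space (S i a)"
    and sets_S: "\<And>i a. a \<in> profiles Xs \<Longrightarrow> sets (S i a) = sets borel"
begin

lemma blla_trans_off_diag: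
  assumes "a \<in> profiles Xs" "b \<in> profiles Xs" "a \<noteq> b"
  shows "blla_trans Xs S \<tau> N a b = (\<Sum>i\<in>UNIV. 1 / real CARD('p) * (1 / real (card (Xs i)) *
           (if b = a(i := b i) then switch_prob S \<tau> N i a b else 0)))"
  unfolding blla_trans_def
proof (intro sum.cong refl arg_cong2[where f="(*)"])
  fix i
  have "(\<Sum>x\<in>Xs i. 1 / real (card (Xs i)) *
          ((if a(i := x) = b then switch_prob S \<tau> N i a (a(i := x)) else 0) +
           (if a = b then 1 - switch_prob S \<tau> N i a (a(i := x)) else 0)))
      = (\<Sum>x\<in>Xs i. if x = b i then 1 / real (card (Xs i)) *
           (if b = a(i := b i) then switch_prob S \<tau> N i a b else 0) else 0)"
    using assms(3) by (intro sum.cong refl) (auto simp: fun_upd_eq_iff[of a i])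
  also have "\<dots> = 1 / real (card (Xs i)) * (if b = a(i := b i) then switch_prob S \<tau> N i a b else 0)"
    using finite_actions profiles_mem[OF assms(2), of i] by simp
  finally show "(\<Sum>x\<in>Xs i. 1 / real (card (Xs i)) *
          ((if a(i := x) = b then switch_prob S \<tau> N i a (a(i := x)) else 0) +
           (if a = b then 1 - switch_prob S \<tau> N i a (a(i := x)) else 0)))
      = 1 / real (card (Xs i)) * (if b = a(i := b i) then switch_prob S \<tau> N i a b else 0)" .
qed

lemma switch_prob_bounds:
  assumes "a \<in> profiles Xs" "b \<in> profiles Xs"
  shows "0 < switch_prob S \<tau> N i a b" "switch_prob S \<tau> N i a b \<le> 1"
proof -
  have "prob_space (S i a)" "sets (S i a) = sets borel" "prob_space (S i b)" "sets (S i b) = sets borel"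
    using assms by (simp_all add: prob_space_S sets_S)
  then show "0 < switch_prob S \<tau> N i a b" "switch_prob S \<tau> N i a b \<le> 1"
    by (rule switch_prob_pos, rule switch_prob_le_1)
qed

lemma blla_move_nonneg:
  assumes "a \<in> profiles Xs" "x \<in> Xs i"
  shows "0 \<le> (if a(i := x) = b then switch_prob S \<tau> N i a (a(i := x)) else 0)
           + (if a = b then 1 - switch_prob S \<tau> N i a (a(i := x)) else 0)"
  using switch_prob_bounds[OF assms(1) profiles_update[OF assms], of \<tau> N i] by auto

lemma stochastic_blla_trans: "stochastic_on (profiles Xs) (blla_trans Xs S \<tau> N)"
  unfolding stochastic_on_def
proof (intro conjI ballI)
  fix a b assume a: "a \<in> profiles Xs" and "b \<in> profiles Xs"
  show "0 \<le> blla_trans Xs S \<tau> N a b"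
    unfolding blla_trans_def using blla_move_nonneg[OF a] by (intro sum_nonneg mult_nonneg_nonneg) auto
next
  fix a assume a: "a \<in> profiles Xs"
  have inner: "(\<Sum>b\<in>profiles Xs. (if a(i := x) = b then switch_prob S \<tau> N i a (a(i := x)) else 0)
          + (if a = b then 1 - switch_prob S \<tau> N i a (a(i := x)) else 0)) = 1"
    if "x \<in> Xs i" for i x
    using finite_profiles[of Xs, OF finite_actions] profiles_update[OF a that] a by (simp add: sum.distrib)
  have "(\<Sum>b\<in>profiles Xs. blla_trans Xs S \<tau> N a b)
      = (\<Sum>i\<in>UNIV. 1 / real CARD('p) * (\<Sum>x\<in>Xs i. 1 / real (card (Xs i)) *
          (\<Sum>b\<in>profiles Xs. (if a(i := x) = b then switch_prob S \<tau> N i a (a(i := x)) else 0)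
           + (if a = b then 1 - switch_prob S \<tau> N i a (a(i := x)) else 0))))"
    unfolding blla_trans_def
    by (subst sum.swap) (simp add: sum_distrib_left sum.swap[of _ "profiles Xs"])
  also have "\<dots> = 1"
    using inner finite_actions actions_nonempty by simp
  finally show "(\<Sum>b\<in>profiles Xs. blla_trans Xs S \<tau> N a b) = 1" .
qed

lemma blla_trans_update_pos:
  assumes a: "a \<in> profiles Xs" and x: "x \<in> Xs i" "x \<noteq> a i"
  shows "0 < blla_trans Xs S \<tau> N a (a(i := x))"
proof -
  define b where "b = a(i := x)"
  define g where "g j y = 1 / real (card (Xs j)) *
      ((if a(j := y) = b then switch_prob S \<tau> N j a (a(j := y)) else 0)
       + (if a = b then 1 - switch_prob S \<tau> N j a (a(j := y)) else 0))" for j y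
  have g_nonneg: "0 \<le> g j y" if "y \<in> Xs j" for j y
    unfolding g_def using blla_move_nonneg[OF a that] by simp
  have "a \<noteq> b" using x(2) unfolding b_def by (metis fun_upd_same)
  moreover have "0 < card (Xs i)" using finite_actions[of i] x(1) card_gt_0_iff by blast
  ultimately have "0 < g i x"
    using switch_prob_bounds[OF a profiles_update[OF a x(1)], of \<tau> N i] by (simp add: g_def b_def)
  also have "\<dots> \<le> (\<Sum>y\<in>Xs i. g i y)" using finite_actions x(1) g_nonneg by (intro member_le_sum) auto
  finally have "0 < 1 / real CARD('p) * (\<Sum>y\<in>Xs i. g i y)" by simp
  also have "\<dots> \<le> (\<Sum>j\<in>UNIV. 1 / real CARD('p) * (\<Sum>y\<in>Xs j. g j y))"
    using g_nonneg by (intro member_le_sum mult_nonneg_nonneg sum_nonneg) auto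
  finally show ?thesis by (simp add: blla_trans_def g_def b_def)
qed

lemma irreducible_blla_trans: "irreducible_on (profiles Xs) (blla_trans Xs S \<tau> N)"
proof -
  let ?G = "transition_graph (profiles Xs) (blla_trans Xs S \<tau> N)"
  have "(a, b) \<in> ?G\<^sup>*" if "a \<in> profiles Xs" "b \<in> profiles Xs" "card {i. a i \<noteq> b i} = n" for n a b
    using that
  proof (induction n arbitrary: a)
    case 0
    then show ?case by (auto simp: fun_eq_iff)
  next
    case (Suc n)
    then obtain i where i: "a i \<noteq> b i" by fastforce
    let ?a' = "a(i := b i)"
    have a': "?a' \<in> profiles Xs" by (rule profiles_update[OF Suc.prems(1) profiles_mem[OF Suc.prems(2)]])
    have edge: "(a, ?a') \<in> ?G"
    proof -
      have "a \<noteq> ?a'" using i by (metis fun_upd_same)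
      moreover have "0 < blla_trans Xs S \<tau> N a ?a'"
        using blla_trans_update_pos[OF Suc.prems(1) profiles_mem[OF Suc.prems(2)]] i by simp
      ultimately show ?thesis using Suc.prems(1) a' by (simp add: transition_graph_def)
    qed
    have "card {j. ?a' j \<noteq> b j} = card ({j. a j \<noteq> b j} - {i})"
      by (rule arg_cong[where f=card]) auto
    also have "\<dots> = n" using Suc.prems(3) i by (simp add: card_Diff_singleton)
    finally have "(?a', b) \<in> ?G\<^sup>*" using Suc.IH a' Suc.prems(2) by blast
    with edge show ?case by (rule converse_rtrancl_into_rtrancl)
  qed
  then show ?thesis unfolding irreducible_on_def by blast
qed

lemma approx_reversible_blla_trans:
  assumes "0 \<le> K"
    and moves: "\<And>i a x. a \<in> profiles Xs \<Longrightarrow> x \<in> Xs i \<Longrightarrow> x \<noteq> a i \<Longrightarrow>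
      \<pi> a * switch_prob S \<tau> N i a (a(i := x)) \<le> K * (\<pi> (a(i := x)) * switch_prob S \<tau> N i (a(i := x)) a)"
  shows "approx_reversible (profiles Xs) (blla_trans Xs S \<tau> N) \<pi> K"
  unfolding approx_reversible_def
proof (intro ballI impI)
  fix a b assume a: "a \<in> profiles Xs" and b: "b \<in> profiles Xs" and "a \<noteq> b"
  have move: "(if b = a(i := b i) then \<pi> a * switch_prob S \<tau> N i a b else 0)
      \<le> (if a = b(i := a i) then K * (\<pi> b * switch_prob S \<tau> N i b a) else 0)" for i
  proof (cases "b = a(i := b i)")
    case True
    then have "b i \<noteq> a i" using \<open>a \<noteq> b\<close> by (metis fun_upd_triv)
    then have "\<pi> a * switch_prob S \<tau> N i a b \<le> K * (\<pi> b * switch_prob S \<tau> N i b a)"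
      using moves[OF a profiles_mem[OF b], of i] True[symmetric] by simp
    then show ?thesis using True fun_upd_self_eq_sym[of b a i] by simp
  qed (simp add: fun_upd_self_eq_sym)
  have "\<pi> a * blla_trans Xs S \<tau> N a b = (\<Sum>i\<in>UNIV. 1 / real CARD('p) * (1 / real (card (Xs i)) *
      (if b = a(i := b i) then \<pi> a * switch_prob S \<tau> N i a b else 0)))"
    unfolding blla_trans_off_diag[OF a b \<open>a \<noteq> b\<close>] sum_distrib_left by (intro sum.cong) auto
  also have "\<dots> \<le> (\<Sum>i\<in>UNIV. 1 / real CARD('p) * (1 / real (card (Xs i)) *
      (if a = b(i := a i) then K * (\<pi> b * switch_prob S \<tau> N i b a) else 0)))"
    using move by (intro sum_mono mult_left_mono) auto
  also have "\<dots> = K * (\<pi> b * blla_trans Xs S \<tau> N b a)"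
    unfolding blla_trans_off_diag[OF b a \<open>a \<noteq> b\<close>[symmetric]] sum_distrib_left by (intro sum.cong) auto
  finally show "\<pi> a * blla_trans Xs S \<tau> N a b \<le> K * (\<pi> b * blla_trans Xs S \<tau> N b a)" .
qed

lemma gibbs_switch_odds_le:
  assumes pot: "is_potential_game Xs U \<phi>" and a: "a \<in> profiles Xs" and x: "x \<in> Xs i"
    and "0 < \<tau>" "1 \<le> N"
    and int: "integrable (noise_dist S U i a (a(i := x))) (\<lambda>\<eta>. exp (- 1 / (real N * \<tau>) * \<eta>))"
  shows "exp (\<phi> a / \<tau>) * switch_prob S \<tau> N i a (a(i := x))
       \<le> mgf (noise_dist S U i a (a(i := x))) (- 1 / (real N * \<tau>)) ^ N
          * (exp (\<phi> (a(i := x)) / \<tau>) * switch_prob S \<tau> N i (a(i := x)) a)"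
proof -
  let ?b = "a(i := x)"
  have b: "?b \<in> profiles Xs" by (rule profiles_update[OF a x])
  have "U i (a(i := a i)) - U i ?b = \<phi> (a(i := a i)) - \<phi> ?b"
    using pot a x profiles_mem[OF a, of i] unfolding is_potential_game_def by blast
  then have "exp (\<phi> a / \<tau>) = exp (\<phi> ?b / \<tau>) * exp ((U i a - U i ?b) / \<tau>)"
    by (simp add: exp_add[symmetric] add_divide_distrib[symmetric])
  moreover have "exp ((U i a - U i ?b) / \<tau>) * switch_prob S \<tau> N i a ?b
      \<le> mgf (noise_dist S U i a ?b) (- 1 / (real N * \<tau>)) ^ N * switch_prob S \<tau> N i ?b a"
    using switch_prob_odds_le[OF prob_space_S[OF a] sets_S[OF a] prob_space_S[OF b] sets_S[OF b] assms(4-)] .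
  ultimately show ?thesis by (simp add: mult_left_mono mult.left_commute)
qed

end

definition switch_moves :: "('p \<Rightarrow> 'b set) \<Rightarrow> ('p \<times> ('p \<Rightarrow> 'b) \<times> 'b) set" where
  "switch_moves Xs = (SIGMA i:UNIV. SIGMA a:profiles Xs. Xs i - {a i})"

definition balance_factor ::
  "('p \<Rightarrow> 'b set) \<Rightarrow> ('p \<Rightarrow> ('p \<Rightarrow> 'b) \<Rightarrow> real measure) \<Rightarrow> ('p \<Rightarrow> ('p \<Rightarrow> 'b) \<Rightarrow> real)
     \<Rightarrow> real \<Rightarrow> nat \<Rightarrow> real" where
  "balance_factor Xs S U \<tau> N = 1 + (\<Sum>(i, a, x)\<in>switch_moves Xs.
     max 0 (mgf (noise_dist S U i a (a(i := x))) (- 1 / (real N * \<tau>)) ^ N - 1))"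

lemma finite_switch_moves:
  "(\<And>i. finite (Xs i)) \<Longrightarrow> finite (switch_moves (Xs :: 'p::finite \<Rightarrow> 'b set))"
  unfolding switch_moves_def using finite_profiles[of Xs] by (intro finite_SigmaI) auto

lemma balance_factor_ge_1: "1 \<le> balance_factor Xs S U \<tau> N"
  unfolding balance_factor_def by (simp add: sum_nonneg case_prod_beta)

lemma mgf_power_le_balance_factor:
  assumes "finite (switch_moves Xs)" "(i, a, x) \<in> switch_moves Xs"
  shows "mgf (noise_dist S U i a (a(i := x))) (- 1 / (real N * \<tau>)) ^ N \<le> balance_factor Xs S U \<tau> N"
  using member_le_sum[OF assms(2) _ assms(1), of "\<lambda>(i, a, x).
      max 0 (mgf (noise_dist S U i a (a(i := x))) (- 1 / (real N * \<tau>)) ^ N - 1)"]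
  unfolding balance_factor_def by (auto simp: case_prod_beta)

lemma balance_factor_tendsto_1:
  fixes Nf :: "real \<Rightarrow> nat"
  assumes "finite (switch_moves Xs)"
    and "\<And>i a x. (i, a, x) \<in> switch_moves Xs \<Longrightarrow>
      ((\<lambda>\<tau>. mgf (noise_dist S U i a (a(i := x))) (- 1 / (real (Nf \<tau>) * \<tau>)) ^ Nf \<tau>) \<longlongrightarrow> 1) (at_right 0)"
  shows "((\<lambda>\<tau>. balance_factor Xs S U \<tau> (Nf \<tau>)) \<longlongrightarrow> 1) (at_right 0)"
proof -
  have "((\<lambda>\<tau>. \<Sum>(i, a, x)\<in>switch_moves Xs.
      max 0 (mgf (noise_dist S U i a (a(i := x))) (- 1 / (real (Nf \<tau>) * \<tau>)) ^ Nf \<tau> - 1)) \<longlongrightarrow> 0)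
      (at_right 0)"
    using assms(2) by (intro tendsto_null_sum) (auto intro!: tendsto_eq_intros)
  from tendsto_add[OF tendsto_const this] show ?thesis by (simp add: balance_factor_def)
qed

context blla_chain
begin

lemma stationary_gibbs_bound:
  assumes pot: "is_potential_game Xs U \<phi>"
    and int: "\<And>i a x \<theta>. a \<in> profiles Xs \<Longrightarrow> x \<in> Xs i \<Longrightarrow> x \<noteq> a i \<Longrightarrow>
      integrable (noise_dist S U i a (a(i := x))) (\<lambda>\<eta>. exp (\<theta> * \<eta>))"
    and "0 < \<tau>" "1 \<le> N" and stat: "stationary_dist (profiles Xs) (blla_trans Xs S \<tau> N) p"
    and "a \<in> profiles Xs" "b \<in> profiles Xs"
  shows "p a * exp (\<phi> b / \<tau>) \<le> balance_factor Xs S U \<tau> N ^ 2 ^ card (profiles Xs) * (p b * exp (\<phi> a / \<tau>))"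
proof (rule invariant_approx_balance)
  let ?K = "balance_factor Xs S U \<tau> N"
  show "approx_reversible (profiles Xs) (blla_trans Xs S \<tau> N) (\<lambda>a. exp (\<phi> a / \<tau>)) ?K"
  proof (rule approx_reversible_blla_trans)
    fix i a x assume move: "a \<in> profiles Xs" "x \<in> Xs i" "x \<noteq> a i"
    then have "(i, a, x) \<in> switch_moves Xs" by (simp add: switch_moves_def)
    then have "mgf (noise_dist S U i a (a(i := x))) (- 1 / (real N * \<tau>)) ^ N \<le> ?K"
      using finite_switch_moves[OF finite_actions] by (rule mgf_power_le_balance_factor[rotated])
    moreover have "0 \<le> exp (\<phi> (a(i := x)) / \<tau>) * switch_prob S \<tau> N i (a(i := x)) a"
      using switch_prob_bounds[OF profiles_update[OF move(1,2)] move(1)] by (simp add: less_imp_le)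
    ultimately show "exp (\<phi> a / \<tau>) * switch_prob S \<tau> N i a (a(i := x))
        \<le> ?K * (exp (\<phi> (a(i := x)) / \<tau>) * switch_prob S \<tau> N i (a(i := x)) a)"
      using gibbs_switch_odds_le[OF pot move(1,2) assms(3,4) int[OF move]]
      by (meson mult_right_mono order_trans)
  qed (use balance_factor_ge_1[of Xs S U \<tau> N] in linarith)
qed (use assms stochastic_blla_trans irreducible_blla_trans balance_factor_ge_1
    finite_profiles[of Xs, OF finite_actions] in \<open>auto simp: stationary_dist_def invariant_on_def\<close>)

lemma centered_noise_switch:
  assumes samples: "\<forall>i. \<forall>a\<in>profiles Xs. prob_space (S i a) \<and> sets (S i a) = sets borel
                    \<and> integrable (S i a) (\<lambda>y. y) \<and> (\<integral>y. y \<partial>S i a) = U i a"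
    and "a \<in> profiles Xs" "b \<in> profiles Xs"
    and int: "integrable (noise_dist S U i a b) (\<lambda>\<eta>. \<eta>)"
      "\<And>\<theta>. integrable (noise_dist S U i a b) (\<lambda>\<eta>. exp (\<theta> * \<eta>))"
  shows "centered_noise (noise_dist S U i a b)"
proof -
  have S: "prob_space (S i a)" "sets (S i a) = sets borel" "integrable (S i a) (\<lambda>y. y)"
    "prob_space (S i b)" "sets (S i b) = sets borel" "integrable (S i b) (\<lambda>y. y)"
    "(\<integral>y. y \<partial>S i a) = U i a" "(\<integral>y. y \<partial>S i b) = U i b"
    using samples assms(2,3) by auto
  show ?thesis
  proof (intro centered_noise.intro centered_noise_axioms.intro)
    show "prob_space (noise_dist S U i a b)" by (rule prob_space_noise_dist) (rule S)+
    show "(\<integral>\<eta>. \<eta> \<partial>noise_dist S U i a b) = 0" by (rule integral_noise_dist) (rule S int)+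
  qed (simp_all add: int)
qed

lemma switch_noise_if_bounded:
  fixes Nf :: "real \<Rightarrow> nat"
  assumes samples: "\<forall>i. \<forall>a\<in>profiles Xs. prob_space (S i a) \<and> sets (S i a) = sets borel
                    \<and> integrable (S i a) (\<lambda>y. y) \<and> (\<integral>y. y \<partial>S i a) = U i a"
    and bounded: "\<forall>i. \<forall>a\<in>profiles Xs. \<forall>x\<in>Xs i. x \<noteq> a i \<longrightarrow>
      (\<exists>c. AE \<eta> in noise_dist S U i a (a(i := x)). c \<le> \<eta> \<and> \<eta> \<le> c + ell)"
    and "0 < \<xi>" "\<xi> < 1" "\<forall>\<tau>>0. 1 \<le> Nf \<tau>"
    and "\<forall>\<tau>>0. real (Nf \<tau>) \<ge> (ln (4 / \<xi>) + 2 / \<tau>) * ell\<^sup>2 / (2 * (1 - \<xi>)\<^sup>2 * \<tau>\<^sup>2)"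
    and move: "(i, a, x) \<in> switch_moves Xs"
  shows "centered_noise (noise_dist S U i a (a(i := x)))
    \<and> ((\<lambda>\<tau>. mgf (noise_dist S U i a (a(i := x))) (- 1 / (real (Nf \<tau>) * \<tau>)) ^ Nf \<tau>) \<longlongrightarrow> 1) (at_right 0)"
proof
  let ?\<nu> = "noise_dist S U i a (a(i := x))"
  have a: "a \<in> profiles Xs" "a(i := x) \<in> profiles Xs" "x \<in> Xs i" "x \<noteq> a i"
    using move profiles_update by (auto simp: switch_moves_def)
  obtain c where c: "AE \<eta> in ?\<nu>. c \<le> \<eta> \<and> \<eta> \<le> c + ell" using bounded a by blast
  have fin: "finite_measure ?\<nu>"
    by (intro prob_space.finite_measure prob_space_noise_dist prob_space_S sets_S a)
  have bounded_int: "integrable ?\<nu> f" if "continuous_on UNIV f" for f :: "real \<Rightarrow> real"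
    by (rule integrable_if_AE_bounded[OF fin _ that c]) simp
  show noise: "centered_noise ?\<nu>"
    by (intro centered_noise_switch[OF samples a(1,2)] bounded_int continuous_intros)
  show "((\<lambda>\<tau>. mgf ?\<nu> (- 1 / (real (Nf \<tau>) * \<tau>)) ^ Nf \<tau>) \<longlongrightarrow> 1) (at_right 0)"
    by (rule centered_noise.mgf_power_tendsto_1_if_bounded[OF noise c]) (use assms in auto)
qed

lemma switch_noise_if_max_rate:
  fixes Nf :: "real \<Rightarrow> nat" and M \<theta>s :: "real \<Rightarrow> real"
  assumes samples: "\<forall>i. \<forall>a\<in>profiles Xs. prob_space (S i a) \<and> sets (S i a) = sets borel
                    \<and> integrable (S i a) (\<lambda>y. y) \<and> (\<integral>y. y \<partial>S i a) = U i a"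
    and mgf: "\<forall>i. \<forall>a\<in>profiles Xs. \<forall>x\<in>Xs i. x \<noteq> a i \<longrightarrow>
      integrable (noise_dist S U i a (a(i := x))) (\<lambda>\<eta>. \<eta>)
      \<and> (\<forall>\<theta>. integrable (noise_dist S U i a (a(i := x))) (\<lambda>\<eta>. exp (\<theta> * \<eta>))
            \<and> (\<integral>\<eta>. exp (\<theta> * \<eta>) \<partial>noise_dist S U i a (a(i := x))) = M \<theta>)"
    and "0 < \<xi>" "\<xi> < 1" "\<forall>\<tau>>0. 1 \<le> Nf \<tau>"
    and "\<forall>\<tau>>0. \<forall>\<theta>. \<theta> * (1 - \<xi>) * \<tau> - ln (M \<theta>) \<le> \<theta>s \<tau> * (1 - \<xi>) * \<tau> - ln (M (\<theta>s \<tau>))"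
    and "\<forall>\<tau>>0. real (Nf \<tau>) \<ge> (ln (4 / \<xi>) + 2 / \<tau>) / ln (exp (\<theta>s \<tau> * (1 - \<xi>) * \<tau>) / M (\<theta>s \<tau>))"
    and move: "(i, a, x) \<in> switch_moves Xs"
  shows "centered_noise (noise_dist S U i a (a(i := x)))
    \<and> ((\<lambda>\<tau>. mgf (noise_dist S U i a (a(i := x))) (- 1 / (real (Nf \<tau>) * \<tau>)) ^ Nf \<tau>) \<longlongrightarrow> 1) (at_right 0)"
proof
  let ?\<nu> = "noise_dist S U i a (a(i := x))"
  have a: "a \<in> profiles Xs" "a(i := x) \<in> profiles Xs" "x \<in> Xs i" "x \<noteq> a i"
    using move profiles_update by (auto simp: switch_moves_def)
  then show noise: "centered_noise ?\<nu>"
    using mgf by (intro centered_noise_switch[OF samples a(1,2)]) auto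
  show "((\<lambda>\<tau>. mgf ?\<nu> (- 1 / (real (Nf \<tau>) * \<tau>)) ^ Nf \<tau>) \<longlongrightarrow> 1) (at_right 0)"
    by (rule centered_noise.mgf_power_tendsto_1_if_max_rate[OF noise])
      (use assms a in \<open>auto simp: mgf_def\<close>)
qed

end

theorem theorem1:
  fixes Xs :: "'p::finite \<Rightarrow> 'b set"
    and U :: "'p \<Rightarrow> ('p \<Rightarrow> 'b) \<Rightarrow> real"
    and phi :: "('p \<Rightarrow> 'b) \<Rightarrow> real"
    and S :: "'p \<Rightarrow> ('p \<Rightarrow> 'b) \<Rightarrow> real measure"
    and Nf :: "real \<Rightarrow> nat"
    and pis :: "real \<Rightarrow> ('p \<Rightarrow> 'b) \<Rightarrow> real"
    and \<xi> ell :: real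
    and M :: "real \<Rightarrow> real"
    and \<theta>s :: "real \<Rightarrow> real"
  assumes fin: "\<forall>i. finite (Xs i) \<and> Xs i \<noteq> {}"
    and pot: "is_potential_game Xs U phi"
    and norm: "\<forall>a\<in>profiles Xs. 0 \<le> phi a \<and> phi a \<le> 1"
    and norm_max: "\<exists>a\<in>profiles Xs. phi a = 1"
    and samples: "\<forall>i. \<forall>a\<in>profiles Xs. prob_space (S i a) \<and> sets (S i a) = sets borel
                    \<and> integrable (S i a) (\<lambda>y. y) \<and> (\<integral>y. y \<partial>S i a) = U i a"
    and Npos: "\<forall>tau>0. 1 \<le> Nf tau"
    and xi: "0 < \<xi>" "\<xi> < 1"
    and cases:
      "(  (\<forall>i. \<forall>a\<in>profiles Xs. \<forall>x\<in>Xs i. x \<noteq> a i \<longrightarrow>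
             (\<exists>c. AE \<eta> in noise_dist S U i a (a(i := x)). c \<le> \<eta> \<and> \<eta> \<le> c + ell))
        \<and> (\<forall>tau>0. real (Nf tau) \<ge>
             (ln (4 / \<xi>) + 2 / tau) * ell\<^sup>2 / (2 * (1 - \<xi>)\<^sup>2 * tau\<^sup>2)))
     \<or>
       (  (\<forall>i. \<forall>a\<in>profiles Xs. \<forall>x\<in>Xs i. x \<noteq> a i \<longrightarrow>
             integrable (noise_dist S U i a (a(i := x))) (\<lambda>\<eta>. \<eta>)
           \<and> integrable (noise_dist S U i a (a(i := x))) (\<lambda>\<eta>. \<eta>\<^sup>2)
           \<and> (\<forall>\<theta>. integrable (noise_dist S U i a (a(i := x))) (\<lambda>\<eta>. exp (\<theta> * \<eta>))
                 \<and> (\<integral>\<eta>. exp (\<theta> * \<eta>) \<partial>noise_dist S U i a (a(i := x))) = M \<theta>))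
        \<and> (\<forall>tau>0. \<forall>\<theta>. \<theta> * (1 - \<xi>) * tau - ln (M \<theta>)
                         \<le> \<theta>s tau * (1 - \<xi>) * tau - ln (M (\<theta>s tau)))
        \<and> (\<forall>tau>0. real (Nf tau) \<ge>
             (ln (4 / \<xi>) + 2 / tau)
               / ln (exp (\<theta>s tau * (1 - \<xi>) * tau) / M (\<theta>s tau))))"
    and stat: "\<forall>tau>0. stationary_dist (profiles Xs) (blla_trans Xs S tau (Nf tau)) (pis tau)"
  shows "\<forall>a\<in>profiles Xs. stoch_stable pis a \<longleftrightarrow> (\<forall>b\<in>profiles Xs. phi b \<le> phi a)"
proof -
  interpret blla_chain Xs S by (rule blla_chain.intro) (use fin samples in auto)
  have moves: "centered_noise (noise_dist S U i a (a(i := x)))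
    \<and> ((\<lambda>\<tau>. mgf (noise_dist S U i a (a(i := x))) (- 1 / (real (Nf \<tau>) * \<tau>)) ^ Nf \<tau>) \<longlongrightarrow> 1) (at_right 0)"
    if "(i, a, x) \<in> switch_moves Xs" for i a x
    using cases
    by (elim disjE conjE)
      ((rule switch_noise_if_bounded[OF samples _ xi Npos _ that]; assumption),
       (rule switch_noise_if_max_rate[where M=M and \<theta>s=\<theta>s, OF samples _ xi Npos _ _ that]; blast))
  let ?K = "\<lambda>\<tau>. balance_factor Xs S U \<tau> (Nf \<tau>) ^ 2 ^ card (profiles Xs)"
  have "(?K \<longlongrightarrow> 1) (at_right 0)"
    using tendsto_power[OF balance_factor_tendsto_1[OF finite_switch_moves[of Xs, OF finite_actions]]]
      moves by force
  moreover have "\<forall>\<tau>>0. \<forall>a\<in>profiles Xs. \<forall>b\<in>profiles Xs.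
      pis \<tau> a * exp (phi b / \<tau>) \<le> ?K \<tau> * (pis \<tau> b * exp (phi a / \<tau>))"
    using stationary_gibbs_bound[OF pot centered_noise.integrable_exp] moves stat Npos
    by (simp add: switch_moves_def)
  moreover have "profiles Xs \<noteq> {}" using norm_max by blast
  ultimately show ?thesis
    using stoch_stable_iff_maximizer[OF finite_profiles[of Xs, OF finite_actions]] stat
    by (simp add: stationary_dist_def)
qed

end
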